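(* Let $U$ and $V$ be nonlocal vertex algebras and let $R(x)$ be an invertible twisting operator for the ordered pair $(U,V)$. Then $R^{-1}(-x)$ (regarded as a linear map $U\otimes V\to V\otimes U\otimes\mathbb{C}((x))$) is an invertible twisting operator for the ordered pair $(V,U)$.
   Context: All vector spaces are over $\mathbb{C}$. A nonlocal vertex algebra is a vector space $V$ with a linear map $Y(\cdot,x):V\to \mathrm{Hom}(V,V((x)))$, $v\mapsto Y(v,x)=\sum_{n\in\mathbb Z}v_nx^{-n-1}$, and a vector $\mathbf 1\in V$ such that for all $v\in V$: $Y(\mathbf 1,x)v=v$, $Y(v,x)\mathbf 1\in V[[x]]$, $\lim_{x\to0}Y(v,x)\mathbf 1=v$; and for all $u,v,w\in V$ there is $k\ge0$ with $(x_0+x_2)^kY(u,x_0+x_2)Y(v,x_2)w=(x_0+x_2)^kY(Y(u,x_0)v,x_2)w$. Write $Y(x):V\otimes V\to V((x))$, $Y(x)(u\otimes v)=Y(u,x)v$. Conventions: $f(x_1\pm x_2)$ for $f\in\mathbb C((x))$ (and binomials $(x_1\pm x_2)^n$) are expanded in nonnegative powers of the second variable. For a linear map $T$ on a tensor product, $T^{ij}$ denotes $T$ acting on the $i$-th and $j$-th tensor factors (identity elsewhere); all maps are extended linearly over scalar formal series. Twisting operator: for nonlocal vertex algebras $U,V$, a twisting operator for $(U,V)$ is a linear map $R(x):V\otimes U\to U\otimes V\otimes\mathbb C((x))$ such that $R(x)(v\otimes\mathbf 1)=\mathbf 1\otimes v$ for $v\in V$, $R(x)(\mathbf 1\otimes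 u)=u\otimes\mathbf 1$ for $u\in U$, $R(x_1)(1\otimes Y(x_2))=(Y(x_2)\otimes1)R^{23}(x_1)R^{12}(x_1+x_2)$ on $V\otimes U\otimes U$, and $R(x_1)(Y(x_2)\otimes 1)=(1\otimes Y(x_2))R^{12}(x_1-x_2)R^{23}(x_1)$ on $V\otimes V\otimes U$. $R(x)$ is invertible if its $\mathbb C((x))$-linear extension $V\otimes U\otimes\mathbb C((x))\to U\otimes V\otimes\mathbb C((x))$ is invertible; the inverse, a $\mathbb C((x))$-linear map, is regarded as a linear map $R^{-1}(x):U\otimes V\to V\otimes U\otimes\mathbb C((x))$. *)

theory Defs
  imports Complex_Main "HOL-Library.Function_Algebras"
begin

class cvs = ab_group_add +
  fixes cscale :: "complex \<Rightarrow> 'a \<Rightarrow> 'a"  (infixr \<open>*c\<close> 75)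
  assumes cscale_add_right: "a *c (x + y) = a *c x + a *c y"
    and cscale_add_left: "(a + b) *c x = a *c x + b *c x"
    and cscale_cscale: "a *c (b *c x) = (a * b) *c x"
    and cscale_one: "1 *c x = x"

interpretation cvs: vector_space "cscale :: complex \<Rightarrow> 'a::cvs \<Rightarrow> 'a"
  by unfold_locales (simp_all add: cscale_add_right cscale_add_left cscale_cscale cscale_one)

lemma cscale_zero_left [simp]: "(0::complex) *c (x::'a::cvs) = 0"
  using cscale_add_left[of 0 0 x] by simp

lemma cscale_minus_one: "(-1::complex) *c (x::'a::cvs) = - x"
  using cscale_add_left[of 1 "-1" x] by (simp add: cscale_one eq_neg_iff_add_eq_0)

abbreviation clinear :: "('a::cvs \<Rightarrow> 'b::cvs) \<Rightarrow> bool" where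
  "clinear f \<equiv> Vector_Spaces.linear cscale cscale f"

instantiation "fun" :: (type, cvs) cvs
begin
definition cscale_fun :: "complex \<Rightarrow> ('a \<Rightarrow> 'b) \<Rightarrow> 'a \<Rightarrow> 'b" where
  "cscale_fun c f = (\<lambda>x. c *c f x)"
instance by standard (simp_all add: cscale_fun_def fun_eq_iff cscale_add_right
      cscale_add_left cscale_cscale cscale_one plus_fun_def)
end

text \<open>Elements of V \<otimes> U are finite formal sums of pairs, two sums being identified iff
  they agree under every C-bilinear form (bilinear forms separate points of V \<otimes> U).\<close>

definition cbil :: "('a::cvs \<Rightarrow> 'b::cvs \<Rightarrow> complex) \<Rightarrow> bool" where
  "cbil \<phi> \<longleftrightarrow> (\<forall>a a' b. \<phi> (a + a') b = \<phi> a b + \<phi> a' b) \<and> (\<forall>c a b. \<phi> (c *c a) b = c * \<phi> a b)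
     \<and> (\<forall>a b b'. \<phi> a (b + b') = \<phi> a b + \<phi> a b') \<and> (\<forall>c a b. \<phi> a (c *c b) = c * \<phi> a b)"

definition tsum :: "('a \<Rightarrow> 'b \<Rightarrow> 'c::comm_monoid_add) \<Rightarrow> ('a \<times> 'b) list \<Rightarrow> 'c" where
  "tsum \<phi> xs = sum_list (map (\<lambda>(a, b). \<phi> a b) xs)"

definition teq :: "('a::cvs \<times> 'b::cvs) list \<Rightarrow> ('a \<times> 'b) list \<Rightarrow> bool" where
  "teq xs ys \<longleftrightarrow> (\<forall>\<phi>. cbil \<phi> \<longrightarrow> tsum \<phi> xs = tsum \<phi> ys)"

lemma teq_equivp: "equivp teq"
  by (rule equivpI) (auto simp: reflp_def symp_def transp_def teq_def)

quotient_type (overloaded) ('a, 'b) tensor = "('a::cvs \<times> 'b::cvs) list" / teq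
  by (rule teq_equivp)

lemma tsum_append [simp]: "tsum \<phi> (xs @ ys) = tsum \<phi> xs + tsum \<phi> ys"
  by (simp add: tsum_def)

lemma cbil_neg: "cbil \<phi> \<Longrightarrow> \<phi> (- a) b = - \<phi> a b"
  using cscale_minus_one[of a] unfolding cbil_def by (metis mult_minus1)

lemma tsum_neg: "cbil \<phi> \<Longrightarrow> tsum \<phi> (map (\<lambda>(a, b). (- a, b)) xs) = - tsum \<phi> xs"
  by (induction xs) (auto simp: tsum_def cbil_neg)

lemma tsum_scale: "cbil \<phi> \<Longrightarrow> tsum \<phi> (map (\<lambda>(a, b). (c *c a, b)) xs) = c * tsum \<phi> xs"
  by (induction xs) (auto simp: tsum_def cbil_def distrib_left)

lift_definition tprod :: "'a::cvs \<Rightarrow> 'b::cvs \<Rightarrow> ('a, 'b) tensor" is "\<lambda>a b. [(a, b)]" .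

instantiation tensor :: (cvs, cvs) cvs
begin
lift_definition zero_tensor :: "('a, 'b) tensor" is "[]" .
lift_definition plus_tensor :: "('a, 'b) tensor \<Rightarrow> ('a, 'b) tensor \<Rightarrow> ('a, 'b) tensor"
  is "\<lambda>xs ys. xs @ ys" by (simp add: teq_def)
lift_definition uminus_tensor :: "('a, 'b) tensor \<Rightarrow> ('a, 'b) tensor"
  is "map (\<lambda>(a, b). (- a, b))" by (simp add: teq_def tsum_neg)
lift_definition minus_tensor :: "('a, 'b) tensor \<Rightarrow> ('a, 'b) tensor \<Rightarrow> ('a, 'b) tensor"
  is "\<lambda>xs ys. xs @ map (\<lambda>(a, b). (- a, b)) ys" by (simp add: teq_def tsum_neg)
lift_definition cscale_tensor :: "complex \<Rightarrow> ('a, 'b) tensor \<Rightarrow> ('a, 'b) tensor"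
  is "\<lambda>c. map (\<lambda>(a, b). (c *c a, b))" by (simp add: teq_def tsum_scale)
instance
proof
  fix a b c :: "('a, 'b) tensor" and r s :: complex
  show "a + b + c = a + (b + c)" by transfer (simp add: teq_def)
  show "a + b = b + a" by transfer (simp add: teq_def add.commute)
  show "0 + a = a" by transfer (simp add: teq_def)
  show "- a + a = 0" by transfer (simp add: teq_def tsum_neg flip: tsum_def, simp add: tsum_def)
  show "a - b = a + - b" by transfer (simp add: teq_def)
  show "r *c (a + b) = r *c a + r *c b" by transfer (simp add: teq_def)
  show "(r + s) *c a = r *c a + s *c a"
    by transfer (simp add: teq_def tsum_scale distrib_right)
  show "r *c (s *c a) = (r * s) *c a"
    by transfer (simp add: teq_def comp_def split_def cscale_cscale)
  show "1 *c a = a"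
    by transfer (simp add: teq_def case_prod_beta cscale_one)
qed
end

text \<open>Linear map out of a tensor product induced by a bilinear map (well defined for
  bilinear \<beta>, which is the only way it is used).\<close>
definition tlift :: "('a::cvs \<Rightarrow> 'b::cvs \<Rightarrow> 'c::comm_monoid_add) \<Rightarrow> ('a, 'b) tensor \<Rightarrow> 'c" where
  "tlift \<beta> t = tsum \<beta> (rep_tensor t)"

definition tmap :: "('a::cvs \<Rightarrow> 'c::cvs) \<Rightarrow> ('b::cvs \<Rightarrow> 'd::cvs) \<Rightarrow> ('a, 'b) tensor \<Rightarrow> ('c, 'd) tensor" where
  "tmap f g = tlift (\<lambda>a b. tprod (f a) (g b))"

definition tassoc :: "(('a::cvs, 'b::cvs) tensor, 'c::cvs) tensor \<Rightarrow> ('a, ('b, 'c) tensor) tensor" where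
  "tassoc = tlift (\<lambda>s c. tlift (\<lambda>a b. tprod a (tprod b c)) s)"

definition tassoc' :: "('a::cvs, ('b::cvs, 'c::cvs) tensor) tensor \<Rightarrow> (('a, 'b) tensor, 'c) tensor" where
  "tassoc' = tlift (\<lambda>a s. tlift (\<lambda>b c. tprod (tprod a b) c) s)"

text \<open>A series in one variable x is a function F :: int \<Rightarrow> W, F n = coefficient of x^n;
  a series in two variables (x1,x2) is G :: int \<Rightarrow> int \<Rightarrow> W, G a b = coefficient of x1^a x2^b.\<close>

text \<open>Sum of a finitely supported family (all sums below are over finite supports).\<close>
definition fsum :: "(int \<Rightarrow> 'a::comm_monoid_add) \<Rightarrow> 'a" where
  "fsum f = sum f {i. f i \<noteq> 0}"

definition delta0 :: "'a \<Rightarrow> int \<Rightarrow> 'a::zero" where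
  "delta0 w = (\<lambda>n. if n = 0 then w else 0)"

text \<open>Membership in W((x)): only finitely many negative powers.\<close>
definition lbounded :: "(int \<Rightarrow> 'a::zero) \<Rightarrow> bool" where
  "lbounded F \<longleftrightarrow> (\<exists>N. \<forall>n<N. F n = 0)"

text \<open>Membership in W \<otimes> C((x)) (viewed inside W((x))): lower truncated, with coefficients
  in a finite-dimensional subspace.\<close>
definition fser :: "(int \<Rightarrow> 'a::cvs) \<Rightarrow> bool" where
  "fser F \<longleftrightarrow> lbounded F \<and> (\<exists>S. finite S \<and> range F \<subseteq> cvs.span S)"

text \<open>F(x1 + x2), F(x1 - x2), expanded in nonnegative powers of x2.\<close>
definition sub2 :: "(int \<Rightarrow> 'a::cvs) \<Rightarrow> int \<Rightarrow> int \<Rightarrow> 'a" where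
  "sub2 F a b = (if 0 \<le> b then (of_int (a + b) gchoose nat b :: complex) *c F (a + b) else 0)"

definition subm2 :: "(int \<Rightarrow> 'a::cvs) \<Rightarrow> int \<Rightarrow> int \<Rightarrow> 'a" where
  "subm2 F a b = (if 0 \<le> b then ((-1) ^ nat b * (of_int (a + b) gchoose nat b) :: complex) *c F (a + b) else 0)"

definition negx :: "(int \<Rightarrow> 'a::ab_group_add) \<Rightarrow> int \<Rightarrow> 'a" where
  "negx F n = (if even n then F n else - F n)"

text \<open>(x1 + x2)^k G(x1, x2).\<close>
definition mulbin :: "nat \<Rightarrow> (int \<Rightarrow> int \<Rightarrow> 'a::cvs) \<Rightarrow> int \<Rightarrow> int \<Rightarrow> 'a" where
  "mulbin k G a b = (\<Sum>j\<le>k. (of_nat (k choose j) :: complex) *c G (a - int (k - j)) (b - int j))"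

text \<open>Extension over scalar formal series of a linear map L : W \<rightarrow> W'((x)):
  ext L applies L(x) to a series in x (this is the C((x))-linear extension);
  ext1 / ext2 apply L(x1) / L(x2) to a series in (x1,x2);
  ext12 applies a map L : W \<rightarrow> W'((x1))((x2)) (e.g. R(x1 - x2)) to a series in x1.\<close>
definition ext :: "('a \<Rightarrow> int \<Rightarrow> 'b::comm_monoid_add) \<Rightarrow> (int \<Rightarrow> 'a) \<Rightarrow> int \<Rightarrow> 'b" where
  "ext L F m = fsum (\<lambda>n. L (F n) (m - n))"

definition ext1 :: "('a \<Rightarrow> int \<Rightarrow> 'b::comm_monoid_add) \<Rightarrow> (int \<Rightarrow> int \<Rightarrow> 'a) \<Rightarrow> int \<Rightarrow> int \<Rightarrow> 'b" where
  "ext1 L G a b = fsum (\<lambda>p. L (G p b) (a - p))"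

definition ext2 :: "('a \<Rightarrow> int \<Rightarrow> 'b::comm_monoid_add) \<Rightarrow> (int \<Rightarrow> int \<Rightarrow> 'a) \<Rightarrow> int \<Rightarrow> int \<Rightarrow> 'b" where
  "ext2 L G a b = fsum (\<lambda>q. L (G a q) (b - q))"

definition ext12 :: "('a \<Rightarrow> int \<Rightarrow> int \<Rightarrow> 'b::comm_monoid_add) \<Rightarrow> (int \<Rightarrow> 'a) \<Rightarrow> int \<Rightarrow> int \<Rightarrow> 'b" where
  "ext12 L B a b = fsum (\<lambda>c. L (B c) (a - c) b)"

text \<open>Y u v n = coefficient of x^n in Y(u,x)v, i.e. Y u v n = u_{-n-1} v.\<close>
definition nonlocal_va :: "('v::cvs \<Rightarrow> 'v \<Rightarrow> int \<Rightarrow> 'v) \<Rightarrow> 'v \<Rightarrow> bool" where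
  "nonlocal_va Y one \<longleftrightarrow>
     clinear Y \<and> (\<forall>u. clinear (Y u)) \<and>
     (\<forall>u v. lbounded (Y u v)) \<and>
     (\<forall>v. Y one v = delta0 v) \<and>
     (\<forall>v. (\<forall>n<0. Y v one n = 0) \<and> Y v one 0 = v) \<and>
     (\<forall>u v w. \<exists>k. mulbin k (\<lambda>a b. fsum (\<lambda>m. sub2 (Y u (Y v w m)) a (b - m)))
                 = mulbin k (\<lambda>a b. Y (Y u v a) w b))"

text \<open>R(x1)(1 \<otimes> Y(x2)) on V \<otimes> U \<otimes> U.\<close>
definition hexL1 :: "('u::cvs \<Rightarrow> 'u \<Rightarrow> int \<Rightarrow> 'u) \<Rightarrow> (('v::cvs, 'u) tensor \<Rightarrow> int \<Rightarrow> ('u, 'v) tensor)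
    \<Rightarrow> (('v, 'u) tensor, 'u) tensor \<Rightarrow> int \<Rightarrow> int \<Rightarrow> ('u, 'v) tensor" where
  "hexL1 YU R t = (\<lambda>a b. R (tmap id (\<lambda>s. tlift YU s b) (tassoc t)) a)"

text \<open>(Y(x2) \<otimes> 1) R^23(x1) R^12(x1 + x2) on V \<otimes> U \<otimes> U.\<close>
definition hexR1 :: "('u::cvs \<Rightarrow> 'u \<Rightarrow> int \<Rightarrow> 'u) \<Rightarrow> (('v::cvs, 'u) tensor \<Rightarrow> int \<Rightarrow> ('u, 'v) tensor)
    \<Rightarrow> (('v, 'u) tensor, 'u) tensor \<Rightarrow> int \<Rightarrow> int \<Rightarrow> ('u, 'v) tensor" where
  "hexR1 YU R t =
     ext2 (\<lambda>e m. tmap (\<lambda>s. tlift YU s m) id (tassoc' e))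
       (ext1 (\<lambda>e c. tmap id (\<lambda>s. R s c) (tassoc e))
          (sub2 (\<lambda>n. tmap (\<lambda>s. R s n) id t)))"

text \<open>R(x1)(Y(x2) \<otimes> 1) on V \<otimes> V \<otimes> U.\<close>
definition hexL2 :: "('v::cvs \<Rightarrow> 'v \<Rightarrow> int \<Rightarrow> 'v) \<Rightarrow> (('v, 'u::cvs) tensor \<Rightarrow> int \<Rightarrow> ('u, 'v) tensor)
    \<Rightarrow> (('v, 'v) tensor, 'u) tensor \<Rightarrow> int \<Rightarrow> int \<Rightarrow> ('u, 'v) tensor" where
  "hexL2 YV R t = (\<lambda>a b. R (tmap (\<lambda>s. tlift YV s b) id t) a)"

text \<open>(1 \<otimes> Y(x2)) R^12(x1 - x2) R^23(x1) on V \<otimes> V \<otimes> U.\<close>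
definition hexR2 :: "('v::cvs \<Rightarrow> 'v \<Rightarrow> int \<Rightarrow> 'v) \<Rightarrow> (('v, 'u::cvs) tensor \<Rightarrow> int \<Rightarrow> ('u, 'v) tensor)
    \<Rightarrow> (('v, 'v) tensor, 'u) tensor \<Rightarrow> int \<Rightarrow> int \<Rightarrow> ('u, 'v) tensor" where
  "hexR2 YV R t =
     ext2 (\<lambda>e m. tmap id (\<lambda>s. tlift YV s m) (tassoc e))
       (ext12 (\<lambda>e. subm2 (\<lambda>n. tmap (\<lambda>s. R s n) id (tassoc' e)))
          (\<lambda>c. tmap id (\<lambda>s. R s c) (tassoc t)))"

definition twisting ::
  "('u::cvs \<Rightarrow> 'u \<Rightarrow> int \<Rightarrow> 'u) \<Rightarrow> 'u \<Rightarrow> ('v::cvs \<Rightarrow> 'v \<Rightarrow> int \<Rightarrow> 'v) \<Rightarrow> 'v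
     \<Rightarrow> (('v, 'u) tensor \<Rightarrow> int \<Rightarrow> ('u, 'v) tensor) \<Rightarrow> bool" where
  "twisting YU oneU YV oneV R \<longleftrightarrow>
     clinear R \<and> (\<forall>t. fser (R t)) \<and>
     (\<forall>v. R (tprod v oneU) = delta0 (tprod oneU v)) \<and>
     (\<forall>u. R (tprod oneV u) = delta0 (tprod u oneV)) \<and>
     (\<forall>t. hexL1 YU R t = hexR1 YU R t) \<and>
     (\<forall>t. hexL2 YV R t = hexR2 YV R t)"

definition tw_invertible :: "('a::cvs \<Rightarrow> int \<Rightarrow> 'b::cvs) \<Rightarrow> bool" where
  "tw_invertible R \<longleftrightarrow> bij_betw (ext R) {F. fser F} {G. fser G}"

definition tw_inverse :: "('a::cvs \<Rightarrow> int \<Rightarrow> 'b::cvs) \<Rightarrow> 'b \<Rightarrow> int \<Rightarrow> 'a" where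
  "tw_inverse R s = inv_into {F. fser F} (ext R) (delta0 s)"

end

theory Submission
  imports Defs "HOL-Library.Product_Plus" "HOL-Computational_Algebra.Formal_Power_Series"
begin

text \<open>Write S = R^-1. Applying a map into series to a formal series is convolution with a kernel,
  and convolution is associative on series that are bounded below and have coefficients in a
  finite-dimensional space, in one variable and also in two variables x1, x2 for expansions of
  F(x1 \<plusminus> x2). Hence S is a two-sided inverse of R for convolution, linear and admissible.
  Composing the second hexagon identity R(x1)(Y(x2) \<otimes> 1) = (1 \<otimes> Y(x2)) R^12(x1 - x2) R^23(x1)
  on the right with S^23(x1) S^12(x1 - x2) and on the left with S(x1) gives
  S(x1)(1 \<otimes> Y(x2)) = (Y(x2) \<otimes> 1) S^23(x1) S^12(x1 - x2); the first hexagon identity yields the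
  analogous identity with x1 + x2. Replacing x1 by -x1 turns x1 \<minusplus> x2 into -(x1 \<plusminus> x2), so these
  are the hexagon identities of S(-x) for the reversed pair.\<close>

lemma clinear_add: "clinear f \<Longrightarrow> f (x + y) = f x + f y"
  by (simp add: Vector_Spaces.linear_iff)

lemma clinear_scale: "clinear f \<Longrightarrow> f (c *c x) = c *c f x"
  by (simp add: Vector_Spaces.linear_iff)

lemma clinear_zero: "clinear f \<Longrightarrow> f 0 = 0"
  by (metis add_cancel_right_right clinear_add)

lemma clinear_sum: "clinear f \<Longrightarrow> f (sum g A) = (\<Sum>a\<in>A. f (g a))"
  by (induct A rule: infinite_finite_induct) (simp_all add: clinear_zero clinear_add)

lemma clinearI: "(\<And>x y. f (x + y) = f x + f y) \<Longrightarrow> (\<And>c x. f (c *c x) = c *c f x) \<Longrightarrow> clinear f"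
  by (simp add: Vector_Spaces.linear_iff cvs.vector_space_axioms)

lemma clinear_id: "clinear id" "clinear (\<lambda>x. x)"
  using cvs.linear_id by (simp_all add: id_def)

lemma clinear_comp: "clinear f \<Longrightarrow> clinear g \<Longrightarrow> clinear (\<lambda>x. f (g x))"
  using Vector_Spaces.linear_compose[of cscale cscale g cscale f] by (simp add: o_def)

lemma clinear_cscale: "clinear (\<lambda>x::'a::cvs. c *c x)"
  by (rule clinearI) (simp_all add: cscale_add_right cscale_cscale mult.commute)

lemma clinear_fun_app: "clinear K \<Longrightarrow> clinear (\<lambda>e. K e n)"
  by (rule clinearI) (simp_all add: clinear_add clinear_scale plus_fun_def cscale_fun_def)

lemma clinear_funI:
  assumes "\<And>n. clinear (\<lambda>e. K e n)"
  shows "clinear K"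
proof (rule clinearI)
  show "K (x + y) = K x + K y" for x y
    using clinear_add[OF assms] by (simp add: plus_fun_def fun_eq_iff)
  show "K (c *c x) = c *c K x" for c x
    using clinear_scale[OF assms] by (simp add: cscale_fun_def fun_eq_iff)
qed

lemma clinear_if: "clinear f \<Longrightarrow> clinear (\<lambda>e. if P then f e else 0)"
  by (cases P) (simp_all add: clinearI)

lemma nonzero_functional_exists:
  fixes w :: "'a::cvs"
  assumes "w \<noteq> 0"
  shows "\<exists>g::'a \<Rightarrow> complex. Vector_Spaces.linear cscale (*) g \<and> g w = 1"
proof -
  interpret cpair: vector_space_pair "cscale :: complex \<Rightarrow> 'a \<Rightarrow> 'a" "(*) :: complex \<Rightarrow> complex \<Rightarrow>
      complex"
    by unfold_locales (simp_all add: algebra_simps)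
  have "cvs.independent {w}" using assms by simp
  from cpair.linear_independent_extend[OF this, of "\<lambda>_. 1"] show ?thesis by auto
qed

definition cbilinear :: "('a::cvs \<Rightarrow> 'b::cvs \<Rightarrow> 'c::cvs) \<Rightarrow> bool" where
  "cbilinear \<beta> \<longleftrightarrow> (\<forall>a. clinear (\<beta> a)) \<and> (\<forall>b. clinear (\<lambda>a. \<beta> a b))"

lemma cbilinear_comp:
  "clinear f \<Longrightarrow> clinear g \<Longrightarrow> cbilinear \<beta> \<Longrightarrow> cbilinear (\<lambda>a b. \<beta> (f a) (g b))"
  unfolding cbilinear_def
      by (auto intro: clinear_comp[where f="\<lambda>x. \<beta> x _"] clinear_comp[where f="\<beta> _"])

section \<open>The universal property of the tensor product\<close>

lemma tsum_Cons [simp]: "tsum \<beta> ((a, b) # xs) = \<beta> a b + tsum \<beta> xs"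
  by (simp add: tsum_def)

lemma tsum_Nil [simp]: "tsum \<beta> [] = 0"
  by (simp add: tsum_def)

text \<open>Scalar bilinear forms separate vectors, so the relation teq, which only
  mentions scalar forms, is respected by every vector-valued bilinear map.\<close>
lemma tsum_teq:
  assumes \<beta>: "cbilinear \<beta>" and eq: "teq xs ys"
  shows "tsum \<beta> xs = tsum \<beta> ys"
proof (rule ccontr)
  assume "tsum \<beta> xs \<noteq> tsum \<beta> ys"
  then obtain g :: "_ \<Rightarrow> complex"
    where g: "Vector_Spaces.linear cscale (*) g" and g1: "g (tsum \<beta> xs - tsum \<beta> ys) = 1"
    using nonzero_functional_exists[of "tsum \<beta> xs - tsum \<beta> ys"] by auto
  have g_add: "g (x + y) = g x + g y" and g_scale: "g (c *c x) = c * g x" for x y c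
    using g by (simp_all add: Vector_Spaces.linear_iff)
  have g_diff: "g (x - y) = g x - g y" for x y
    by (metis g_add diff_add_cancel add_diff_cancel_right')
  have g_tsum: "g (tsum \<beta> zs) = tsum (\<lambda>a b. g (\<beta> a b)) zs" for zs
  proof (induct zs)
    case Nil then show ?case using g_scale[of 0 0] by simp
  next
    case (Cons p zs) then show ?case by (cases p) (simp add: g_add)
  qed
  have "cbil (\<lambda>a b. g (\<beta> a b))"
    using \<beta> unfolding cbil_def cbilinear_def by (simp add: Vector_Spaces.linear_iff g_add g_scale)
  then have "tsum (\<lambda>a b. g (\<beta> a b)) xs = tsum (\<lambda>a b. g (\<beta> a b)) ys"
    using eq by (simp add: teq_def)
  then show False using g1 by (simp add: g_diff g_tsum)
qed

lemma tlift_abs_tensor: "cbilinear \<beta> \<Longrightarrow> tlift \<beta> (abs_tensor xs) = tsum \<beta> xs"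
  unfolding tlift_def
  by (rule tsum_teq, assumption, rule Quotient3_rep_abs[OF Quotient3_tensor],
      rule equivp_reflp[OF teq_equivp])

lemma tlift_tprod: "cbilinear \<beta> \<Longrightarrow> tlift \<beta> (tprod a b) = \<beta> a b"
  by (simp add: tprod.abs_eq tlift_abs_tensor)

lemma tsum_map_cscale:
  "cbilinear \<beta> \<Longrightarrow> tsum \<beta> (map (\<lambda>(a, b). (c *c a, b)) xs) = c *c tsum \<beta> xs"
proof (induct xs)
  case Nil then show ?case by simp
next
  case (Cons p xs) then show ?case
    by (cases p) (simp add: cbilinear_def cscale_add_right Vector_Spaces.linear_iff)
qed

lemma clinear_tlift: "cbilinear \<beta> \<Longrightarrow> clinear (tlift \<beta>)"
proof (rule clinearI)
  fix x y :: "('a, 'b) tensor" and c assume \<beta>: "cbilinear \<beta>"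
  show "tlift \<beta> (x + y) = tlift \<beta> x + tlift \<beta> y"
    by (induct x rule: tensor.abs_induct, induct y rule: tensor.abs_induct)
      (simp add: plus_tensor.abs_eq tlift_abs_tensor \<beta>)
  show "tlift \<beta> (c *c x) = c *c tlift \<beta> x"
    by (induct x rule: tensor.abs_induct)
      (simp add: cscale_tensor.abs_eq tlift_abs_tensor \<beta> tsum_map_cscale)
qed

lemma abs_tensor_eq_sum_list: "abs_tensor xs = sum_list (map (\<lambda>(a, b). tprod a b) xs)"
proof (induct xs)
  case Nil then show ?case by (simp add: zero_tensor.abs_eq)
next
  case (Cons p xs)
  have "abs_tensor (p # xs) = abs_tensor [p] + abs_tensor xs" by (simp add: plus_tensor.abs_eq)
  then show ?case using Cons by (cases p) (simp add: tprod.abs_eq)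
qed

lemma tensor_induct [case_names zero tprod add]:
  assumes "P 0" "\<And>a b. P (tprod a b)" "\<And>x y. P x \<Longrightarrow> P y \<Longrightarrow> P (x + y)"
  shows "P t"
proof (induct t rule: tensor.abs_induct)
  case (1 xs) show ?case unfolding abs_tensor_eq_sum_list
    by (induct xs) (auto simp: assms)
qed

lemma tensor_clinear_eqI:
  assumes "clinear f" "clinear g" "\<And>a b. f (tprod a b) = g (tprod a b)"
  shows "f t = g t"
  by (induct t rule: tensor_induct) (simp_all add: assms clinear_zero clinear_add)

lemma cbilinear_tprod: "cbilinear tprod"
proof -
  have "tprod (a + a') b = tprod a b + tprod a' b" "tprod a (b + b') = tprod a b + tprod a b'"
    "tprod (c *c a) b = c *c tprod a b" "tprod a (c *c b) = c *c tprod a b"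
    for a a' :: 'a and b b' :: 'b and c
    by (transfer, simp add: teq_def cbil_def)+
  then show ?thesis
    by (simp add: cbilinear_def Vector_Spaces.linear_iff cvs.vector_space_axioms)
qed

lemma clinear_tprod_left: "clinear (\<lambda>a. tprod a b)"
  and clinear_tprod_right: "clinear (tprod a)"
  using cbilinear_tprod unfolding cbilinear_def by blast+

lemma tprod_zero_left [simp]: "tprod 0 b = 0"
  by (rule clinear_zero[OF clinear_tprod_left])

lemma tprod_zero_right [simp]: "tprod a 0 = 0"
  by (rule clinear_zero[OF clinear_tprod_right])

lemma cbilinear_tmap: "clinear f \<Longrightarrow> clinear g \<Longrightarrow> cbilinear (\<lambda>a b. tprod (f a) (g b))"
  by (rule cbilinear_comp[OF _ _ cbilinear_tprod])

lemma clinear_tmap: "clinear f \<Longrightarrow> clinear g \<Longrightarrow> clinear (tmap f g)"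
  unfolding tmap_def by (intro clinear_tlift cbilinear_tmap)

lemma tmap_tprod [simp]: "clinear f \<Longrightarrow> clinear g \<Longrightarrow> tmap f g (tprod a b) = tprod (f a) (g b)"
  unfolding tmap_def by (intro tlift_tprod cbilinear_tmap)

lemma tmap_id: "tmap id id t = t"
  by (rule tensor_clinear_eqI[where g="\<lambda>x. x"]) (simp_all add: clinear_tmap clinear_id)

lemma tmap_zero_left: "clinear g \<Longrightarrow> tmap (\<lambda>w. 0) g z = 0"
  by (rule tensor_clinear_eqI[where g="\<lambda>_. 0"]) (simp_all add: clinear_tmap clinearI)

lemma tmap_zero_right: "clinear f \<Longrightarrow> tmap f (\<lambda>w. 0) z = 0"
  by (rule tensor_clinear_eqI[where g="\<lambda>_. 0"]) (simp_all add: clinear_tmap clinearI)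

lemma tmap_cscale_left:
  assumes f: "clinear f" and g: "clinear g"
  shows "tmap (\<lambda>w. c *c f w) g z = c *c tmap f g z"
proof (rule tensor_clinear_eqI[where g="\<lambda>z. c *c tmap f g z"])
  have cf: "clinear (\<lambda>w. c *c f w)" by (rule clinear_comp[OF clinear_cscale f])
  show "clinear (tmap (\<lambda>w. c *c f w) g)" by (rule clinear_tmap[OF cf g])
  show "clinear (\<lambda>z. c *c tmap f g z)"
      by (rule clinear_comp[OF clinear_cscale clinear_tmap[OF f g]])
  show "tmap (\<lambda>w. c *c f w) g (tprod a b) = c *c tmap f g (tprod a b)" for a b
    using clinear_scale[OF clinear_tprod_left] by (simp add: cf f g)
qed

lemma tmap_cscale_right:
  assumes f: "clinear f" and g: "clinear g"
  shows "tmap f (\<lambda>w. c *c g w) z = c *c tmap f g z"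
proof (rule tensor_clinear_eqI[where g="\<lambda>z. c *c tmap f g z"])
  have cg: "clinear (\<lambda>w. c *c g w)" by (rule clinear_comp[OF clinear_cscale g])
  show "clinear (tmap f (\<lambda>w. c *c g w))" by (rule clinear_tmap[OF f cg])
  show "clinear (\<lambda>z. c *c tmap f g z)"
      by (rule clinear_comp[OF clinear_cscale clinear_tmap[OF f g]])
  show "tmap f (\<lambda>w. c *c g w) (tprod a b) = c *c tmap f g (tprod a b)" for a b
    using clinear_scale[OF clinear_tprod_right] by (simp add: cg f g)
qed

lemma cbilinear_tassoc: "cbilinear (\<lambda>s c. tlift (\<lambda>a b. tprod a (tprod b c)) s)"
proof -
  have inner: "cbilinear (\<lambda>a b. tprod a (tprod b c))" for c :: 'c
    by (rule cbilinear_comp[OF clinear_id(2) clinear_tprod_left cbilinear_tprod])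
  have "clinear (\<lambda>c::'c. tlift (\<lambda>a b. tprod a (tprod b c)) s)" for s :: "('a, 'b) tensor"
    by (induct s rule: tensor_induct)
      (simp_all add: clinear_zero[OF clinear_tlift[OF inner]]
          clinear_add[OF clinear_tlift[OF inner]]
        tlift_tprod[OF inner] clinear_comp[OF clinear_tprod_right clinear_tprod_right]
        Vector_Spaces.linear_iff cvs.vector_space_axioms clinear_add[OF clinear_tprod_right]
        clinear_scale[OF clinear_tprod_right] cscale_add_right)
  then show ?thesis unfolding cbilinear_def using clinear_tlift[OF inner] by blast
qed

lemma cbilinear_tassoc': "cbilinear (\<lambda>a s. tlift (\<lambda>b c. tprod (tprod a b) c) s)"
proof -
  have inner: "cbilinear (\<lambda>b c. tprod (tprod a b) c)" for a :: 'a
    by (rule cbilinear_comp[OF clinear_tprod_right clinear_id(2) cbilinear_tprod])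
  have "clinear (\<lambda>a::'a. tlift (\<lambda>b c. tprod (tprod a b) c) s)" for s :: "('b, 'c) tensor"
    by (induct s rule: tensor_induct)
      (simp_all add: clinear_zero[OF clinear_tlift[OF inner]]
          clinear_add[OF clinear_tlift[OF inner]]
        tlift_tprod[OF inner] Vector_Spaces.linear_iff cvs.vector_space_axioms
        clinear_add[OF clinear_tprod_left] clinear_scale[OF clinear_tprod_left] cscale_add_right)
  then show ?thesis unfolding cbilinear_def using clinear_tlift[OF inner] by blast
qed

lemma clinear_tassoc: "clinear tassoc"
  unfolding tassoc_def by (rule clinear_tlift[OF cbilinear_tassoc])

lemma clinear_tassoc': "clinear tassoc'"
  unfolding tassoc'_def by (rule clinear_tlift[OF cbilinear_tassoc'])

lemma tassoc_tprod [simp]: "tassoc (tprod (tprod a b) c) = tprod a (tprod b c)"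
  unfolding tassoc_def
  by (simp add: tlift_tprod cbilinear_tassoc
      cbilinear_comp[OF clinear_id(2) clinear_tprod_left cbilinear_tprod])

lemma tassoc'_tprod [simp]: "tassoc' (tprod a (tprod b c)) = tprod (tprod a b) c"
  unfolding tassoc'_def
  by (simp add: tlift_tprod cbilinear_tassoc'
      cbilinear_comp[OF clinear_tprod_right clinear_id(2) cbilinear_tprod])

lemma tassoc'_tassoc [simp]: "tassoc' (tassoc t) = t"
proof (induct t rule: tensor_induct)
  case (tprod s c)
  show ?case
    by (rule tensor_clinear_eqI[OF clinear_comp[OF clinear_tassoc' clinear_comp[OF clinear_tassoc
            clinear_tprod_left]] clinear_tprod_left]) simp
qed (simp_all add: clinear_zero clinear_add clinear_tassoc clinear_tassoc')

lemma tassoc_tassoc' [simp]: "tassoc (tassoc' t) = t"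
proof (induct t rule: tensor_induct)
  case (tprod a s)
  show ?case
    by (rule tensor_clinear_eqI[OF clinear_comp[OF clinear_tassoc clinear_comp[OF clinear_tassoc'
            clinear_tprod_right]] clinear_tprod_right]) simp
qed (simp_all add: clinear_zero clinear_add clinear_tassoc clinear_tassoc')

lemma cscale_fun_apply: "(c *c f) x = c *c f x"
  by (simp add: cscale_fun_def)

definition supp_sum :: "('i \<Rightarrow> 'a::comm_monoid_add) \<Rightarrow> 'a" where
  "supp_sum f = sum f {x. f x \<noteq> 0}"

lemma fsum_eq_supp_sum: "fsum = supp_sum"
  by (rule ext) (simp add: fsum_def supp_sum_def)

lemma supp_sum_eq_sum: "finite A \<Longrightarrow> {x. f x \<noteq> 0} \<subseteq> A \<Longrightarrow> supp_sum f = sum f A"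
  unfolding supp_sum_def by (rule sum.mono_neutral_left) auto

lemma supp_sum_zero [simp]: "supp_sum (\<lambda>_. 0) = 0"
  by (simp add: supp_sum_def)

lemma supp_sum_cong: "(\<And>x. f x = g x) \<Longrightarrow> supp_sum f = supp_sum g"
  by (metis ext)

lemma supp_sum_single: "(\<And>x. x \<noteq> a \<Longrightarrow> f x = 0) \<Longrightarrow> supp_sum f = f a"
  by (subst supp_sum_eq_sum[of "{a}"]) auto

lemma supp_sum_reindex:
  assumes "inj h" "{x. f x \<noteq> 0} \<subseteq> range h"
  shows "supp_sum (\<lambda>y. f (h y)) = supp_sum f"
proof -
  have "{y. f (h y) \<noteq> 0} = h -` {x. f x \<noteq> 0}" by auto
  moreover have "h ` (h -` {x. f x \<noteq> 0}) = {x. f x \<noteq> 0}" using assms(2) by auto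
  ultimately show ?thesis unfolding supp_sum_def
    by (metis (no_types, lifting) assms(1) inj_on_subset subset_UNIV sum.reindex_cong)
qed

lemma supp_sum_shift: "supp_sum (\<lambda>x. f (x + k)) = supp_sum
    (f :: 'i::ab_group_add \<Rightarrow> 'a::comm_monoid_add)"
  by (rule supp_sum_reindex) (auto simp: inj_def intro: image_eqI[where x="_ - k"])

lemma supp_sum_nonzero_imp: "supp_sum f \<noteq> 0 \<Longrightarrow> \<exists>x. f x \<noteq> 0"
  by (rule ccontr) (auto simp: supp_sum_def)

lemma supp_sum_add:
  assumes "finite {x. f x \<noteq> 0}" "finite {x. g x \<noteq> 0}"
  shows "supp_sum (\<lambda>x. f x + g x) = supp_sum f + supp_sum g"
proof -
  let ?A = "{x. f x \<noteq> 0} \<union> {x. g x \<noteq> 0}"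
  have "supp_sum (\<lambda>x. f x + g x) = sum (\<lambda>x. f x + g x) ?A" by (rule supp_sum_eq_sum)
      (use assms in auto)
  also have "\<dots> = sum f ?A + sum g ?A" by (simp add: sum.distrib)
  also have "sum f ?A = supp_sum f" by (rule supp_sum_eq_sum[symmetric]) (use assms in auto)
  also have "sum g ?A = supp_sum g" by (rule supp_sum_eq_sum[symmetric]) (use assms in auto)
  finally show ?thesis .
qed

lemma clinear_supp_sum:
  assumes "clinear L" "finite {x. f x \<noteq> 0}"
  shows "L (supp_sum f) = supp_sum (\<lambda>x. L (f x))"
proof -
  have "L (supp_sum f) = sum (\<lambda>x. L (f x)) {x. f x \<noteq> 0}"
    by (simp add: supp_sum_def clinear_sum[OF assms(1)])
  also have "\<dots> = supp_sum (\<lambda>x. L (f x))"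
    by (rule supp_sum_eq_sum[symmetric]) (use assms clinear_zero[OF assms(1)] in auto)
  finally show ?thesis .
qed

lemma supp_sum_in_span: "(\<And>x. f x \<in> cvs.span T) \<Longrightarrow> supp_sum f \<in> cvs.span T"
  unfolding supp_sum_def by (rule cvs.span_sum) auto

lemma supp_sum_cscale: "c \<noteq> 0 \<Longrightarrow> supp_sum (\<lambda>x. c *c f x) = c *c (supp_sum f :: 'a::cvs)"
  unfolding supp_sum_def by (simp add: cvs.scale_sum_right)

lemma supp_sum_nested_eq_sum:
  assumes fin: "finite {(x,y). f x y \<noteq> 0}"
  shows "supp_sum (\<lambda>x. supp_sum (\<lambda>y. f x y)) = sum
      (\<lambda>x. sum (\<lambda>y. f x y) (snd ` {(x,y). f x y \<noteq> 0})) (fst ` {(x,y). f x y \<noteq> 0})"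
proof -
  let ?P = "{(x,y). f x y \<noteq> 0}"
  let ?A = "fst ` ?P" and ?B = "snd ` ?P"
  have fA: "finite ?A" "finite ?B" using fin by auto
  have inner: "supp_sum (\<lambda>y. f x y) = sum (\<lambda>y. f x y) ?B" for x
  proof (rule supp_sum_eq_sum[OF fA(2)])
    show "{y. f x y \<noteq> 0} \<subseteq> ?B"
    proof
      fix y assume "y \<in> {y. f x y \<noteq> 0}"
      then show "y \<in> ?B" by (intro image_eqI[of _ _ "(x,y)"]) auto
    qed
  qed
  have outer: "{x. sum (\<lambda>y. f x y) ?B \<noteq> 0} \<subseteq> ?A"
  proof
    fix x assume "x \<in> {x. sum (\<lambda>y. f x y) ?B \<noteq> 0}"
    then have "sum (\<lambda>y. f x y) ?B \<noteq> 0" by simp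
    then obtain y where "y \<in> ?B" "f x y \<noteq> 0" by (rule sum.not_neutral_contains_not_neutral)
    then show "x \<in> ?A" by (intro image_eqI[of _ _ "(x,y)"]) auto
  qed
  show ?thesis unfolding inner by (rule supp_sum_eq_sum[OF fA(1) outer])
qed

lemma supp_sum_swap:
  assumes fin: "finite {(x,y). f x y \<noteq> 0}"
  shows "supp_sum (\<lambda>x. supp_sum (\<lambda>y. f x y)) = supp_sum (\<lambda>y. supp_sum (\<lambda>x. f x y))"
proof -
  have fin': "finite {(y,x). f x y \<noteq> 0}"
  proof -
    have "{(y,x). f x y \<noteq> 0} = (\<lambda>(x,y). (y,x)) ` {(x,y). f x y \<noteq> 0}" by auto
    then show ?thesis using fin by simp
  qed
  have e1: "snd ` {(y,x). f x y \<noteq> 0} = fst ` {(x,y). f x y \<noteq> 0}" by force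
  have e2: "fst ` {(y,x). f x y \<noteq> 0} = snd ` {(x,y). f x y \<noteq> 0}" by force
  show ?thesis
    unfolding supp_sum_nested_eq_sum[OF fin] supp_sum_nested_eq_sum[of "\<lambda>y x. f x y", OF fin'] e1 e2
    by (rule sum.swap)
qed

lemma supp_sum_pair:
  assumes fin: "finite {(x,y). f x y \<noteq> 0}"
  shows "supp_sum (\<lambda>x. supp_sum (\<lambda>y. f x y)) = supp_sum (\<lambda>p. f (fst p) (snd p))"
proof -
  let ?P = "{(x,y). f x y \<noteq> 0}"
  let ?A = "fst ` ?P" and ?B = "snd ` ?P"
  have fA: "finite ?A" "finite ?B" using fin by auto
  have "supp_sum (\<lambda>x. supp_sum (\<lambda>y. f x y)) = sum (\<lambda>p. f (fst p) (snd p)) (?A \<times> ?B)"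
    unfolding supp_sum_nested_eq_sum[OF fin] by (simp add: sum.cartesian_product split_def)
  also have "\<dots> = supp_sum (\<lambda>p. f (fst p) (snd p))"
  proof (rule supp_sum_eq_sum[symmetric])
    show "finite (?A \<times> ?B)" using fA by simp
    show "{x. f (fst x) (snd x) \<noteq> 0} \<subseteq> ?A \<times> ?B"
    proof
      fix p assume h: "p \<in> {x. f (fst x) (snd x) \<noteq> 0}"
      then have "p \<in> ?P" by (cases p) auto
      then show "p \<in> ?A \<times> ?B" by (cases p) force
    qed
  qed
  finally show ?thesis .
qed

section \<open>Convolution of kernels with series supported in cones\<close>

text \<open>A kernel K maps vectors to series; conv K applies it to a series G and collects powers,
  generalising ext from int to an arbitrary index group.\<close>
definition conv :: "('a \<Rightarrow> 'i::ab_group_add \<Rightarrow> 'b::comm_monoid_add) \<Rightarrow> ('i \<Rightarrow> 'a) \<Rightarrow> 'i \<Rightarrow> 'b" where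
  "conv K G p = supp_sum (\<lambda>q. K (G q) (p - q))"

definition delta :: "'a \<Rightarrow> 'i::zero \<Rightarrow> 'a::zero" where
  "delta e p = (if p = 0 then e else 0)"

text \<open>C N is the exponent set of series "of order at least N" (e.g. {N..} for x^N C[[x]]);
  cone_triple_finite makes every convolution of three such series a finite sum.\<close>
locale cone_index =
  fixes C :: "int \<Rightarrow> 'i::ab_group_add set"
  assumes cone_antimono: "N \<le> M \<Longrightarrow> C M \<subseteq> C N"
    and cone_add_mem: "x \<in> C N \<Longrightarrow> y \<in> C M \<Longrightarrow> x + y \<in> C (N + M)"
    and cone_triple_finite: "finite {(x,y). x \<in> C N \<and> y \<in> C M \<and> p - x - y \<in> C K}"
    and zero_in_cone: "0 \<in> C 0"
begin

lemma cone_pair_finite: "finite {x. x \<in> C N \<and> p - x \<in> C M}"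
proof -
  have "{x. x \<in> C N \<and> p - x \<in> C M} \<subseteq> fst ` {(x,y). x \<in> C N \<and> y \<in> C M \<and> p - x - y \<in> C 0}"
    using zero_in_cone by (auto intro!: image_eqI[where x="(_, p - _)"])
  then show ?thesis using cone_triple_finite finite_subset by blast
qed

definition supp_in :: "('i \<Rightarrow> 'a::zero) \<Rightarrow> int \<Rightarrow> bool" where
  "supp_in G N \<longleftrightarrow> (\<forall>q. G q \<noteq> 0 \<longrightarrow> q \<in> C N)"

definition cone_supp :: "('i \<Rightarrow> 'a::zero) \<Rightarrow> bool" where
  "cone_supp G \<longleftrightarrow> (\<exists>N. supp_in G N)"

definition fin_span :: "('i \<Rightarrow> 'a::cvs) \<Rightarrow> bool" where
  "fin_span G \<longleftrightarrow> (\<exists>S. finite S \<and> range G \<subseteq> cvs.span S)"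

definition admissible :: "('i \<Rightarrow> 'a::cvs) \<Rightarrow> bool" where
  "admissible G \<longleftrightarrow> cone_supp G \<and> fin_span G"

definition cone_kernel :: "('a::cvs \<Rightarrow> 'i \<Rightarrow> 'b::cvs) \<Rightarrow> bool" where
  "cone_kernel K \<longleftrightarrow> clinear K \<and> (\<forall>e. cone_supp (K e))"

definition admissible_kernel :: "('a::cvs \<Rightarrow> 'i \<Rightarrow> 'b::cvs) \<Rightarrow> bool" where
  "admissible_kernel K \<longleftrightarrow> cone_kernel K \<and> (\<forall>e. fin_span (K e))"

lemma supp_in_mono: "supp_in G N \<Longrightarrow> M \<le> N \<Longrightarrow> supp_in G M"
  unfolding supp_in_def using cone_antimono by blast

lemma supp_in_zero [simp]: "supp_in (\<lambda>_. 0) N"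
  by (simp add: supp_in_def)

lemma uniform_supp_in:
  assumes K: "cone_kernel K" and S: "finite S"
  shows "\<exists>N. \<forall>e\<in>cvs.span S. supp_in (K e) N"
proof -
  have "\<forall>s. \<exists>N. supp_in (K s) N" using K by (auto simp: cone_kernel_def cone_supp_def)
  then obtain f where f: "\<And>s. supp_in (K s) (f s)" by metis
  define N where "N = Min (insert 0 (f ` S))"
  have N: "supp_in (K s) N" if "s \<in> S" for s
    using f[of s] that S by (auto simp: N_def intro: supp_in_mono)
  have lin: "clinear K" using K by (simp add: cone_kernel_def)
  have "cvs.subspace {e. supp_in (K e) N}"
    unfolding cvs.subspace_def
    apply (auto simp: clinear_zero[OF lin] clinear_add[OF lin] clinear_scale[OF lin] supp_in_def
        plus_fun_apply cscale_fun_apply)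
    by (metis add.left_neutral)
  then have "cvs.span S \<subseteq> {e. supp_in (K e) N}"
    by (rule cvs.span_minimal[rotated]) (use N in auto)
  then show ?thesis by auto
qed

lemma uniform_fin_span:
  assumes K: "admissible_kernel K" and S: "finite S"
  shows "\<exists>T. finite T \<and> (\<forall>e\<in>cvs.span S. \<forall>p. K e p \<in> cvs.span T)"
proof -
  have "\<forall>s. \<exists>T. finite T \<and> range (K s) \<subseteq> cvs.span T" using K
      by (auto simp: admissible_kernel_def fin_span_def)
  then obtain f where f: "\<And>s. finite (f s) \<and> range (K s) \<subseteq> cvs.span (f s)" by metis
  define T where "T = \<Union>(f ` S)"
  have fT: "finite T" using f S by (auto simp: T_def)
  have N: "K s p \<in> cvs.span T" if "s \<in> S" for s p
    using f[of s] that cvs.span_mono[of "f s" T] by (auto simp: T_def)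
  have lin: "clinear K" using K by (simp add: admissible_kernel_def cone_kernel_def)
  have "cvs.subspace {e. \<forall>p. K e p \<in> cvs.span T}"
    unfolding cvs.subspace_def
    by (auto simp: clinear_zero[OF lin] clinear_add[OF lin] clinear_scale[OF lin] plus_fun_apply
        cscale_fun_apply
        cvs.span_zero cvs.span_add cvs.span_scale)
  then have "cvs.span S \<subseteq> {e. \<forall>p. K e p \<in> cvs.span T}"
    by (rule cvs.span_minimal[rotated]) (use N in auto)
  then show ?thesis using fT by auto
qed

lemma admissibleE:
  assumes "admissible G"
  obtains N S where "supp_in G N" "finite S" "\<And>q. G q \<in> cvs.span S"
  using assms unfolding admissible_def cone_supp_def fin_span_def by blast

lemma finite_conv_terms:
  assumes K: "cone_kernel K" and G: "admissible G"
  shows "finite {q. K (G q) (p - q) \<noteq> 0}"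
proof -
  obtain N S where N: "supp_in G N" and S: "finite S" "\<And>q. G q \<in> cvs.span S"
      using admissibleE[OF G] by blast
  obtain M where M: "\<forall>e\<in>cvs.span S. supp_in (K e) M" using uniform_supp_in[OF K S(1)] by blast
  have lin: "clinear K" using K by (simp add: cone_kernel_def)
  have "{q. K (G q) (p - q) \<noteq> 0} \<subseteq> {x. x \<in> C N \<and> p - x \<in> C M}"
  proof safe
    fix q assume q: "K (G q) (p - q) \<noteq> 0"
    then have "G q \<noteq> 0" using clinear_zero[OF lin] by auto
    then show "q \<in> C N" using N by (simp add: supp_in_def)
    show "p - q \<in> C M" using M S(2)[of q] q by (simp add: supp_in_def)
  qed
  then show ?thesis using cone_pair_finite finite_subset by blast
qed

lemma cone_supp_conv:
  assumes K: "cone_kernel K" and G: "admissible G"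
  shows "cone_supp (conv K G)"
proof -
  obtain N S where N: "supp_in G N" and S: "finite S" "\<And>q. G q \<in> cvs.span S"
      using admissibleE[OF G] by blast
  obtain M where M: "\<forall>e\<in>cvs.span S. supp_in (K e) M" using uniform_supp_in[OF K S(1)] by blast
  have lin: "clinear K" using K by (simp add: cone_kernel_def)
  have "supp_in (conv K G) (N + M)"
    unfolding supp_in_def
  proof safe
    fix p assume "conv K G p \<noteq> 0"
    then obtain q where q: "K (G q) (p - q) \<noteq> 0" unfolding conv_def
        by (blast dest: supp_sum_nonzero_imp)
    then have "G q \<noteq> 0" using clinear_zero[OF lin] by auto
    then have "q \<in> C N" using N by (simp add: supp_in_def)
    moreover have "p - q \<in> C M" using M S(2)[of q] q by (simp add: supp_in_def)
    ultimately show "p \<in> C (N + M)" using cone_add_mem by fastforce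
  qed
  then show ?thesis by (auto simp: cone_supp_def)
qed

lemma fin_span_conv:
  assumes K: "admissible_kernel K" and G: "admissible G"
  shows "fin_span (conv K G)"
proof -
  obtain N S where S: "finite S" "\<And>q. G q \<in> cvs.span S" using admissibleE[OF G] by blast
  obtain T where T: "finite T" "\<forall>e\<in>cvs.span S. \<forall>p. K e p \<in> cvs.span T"
      using uniform_fin_span[OF K S(1)] by blast
  have "conv K G p \<in> cvs.span T" for p unfolding conv_def by (rule supp_sum_in_span)
      (use T S in auto)
  then show ?thesis using T by (auto simp: fin_span_def)
qed

lemma admissible_conv: "admissible_kernel K \<Longrightarrow> admissible G \<Longrightarrow> admissible (conv K G)"
  using cone_supp_conv fin_span_conv by (auto simp: admissible_def admissible_kernel_def)

lemma admissible_add: "admissible F \<Longrightarrow> admissible G \<Longrightarrow> admissible (\<lambda>p. F p + G p)"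
proof -
  assume F: "admissible F" and G: "admissible G"
  obtain N S where N: "supp_in F N" and S: "finite S" "\<And>q. F q \<in> cvs.span S"
      using admissibleE[OF F] by blast
  obtain M T where M: "supp_in G M" and T: "finite T" "\<And>q. G q \<in> cvs.span T"
      using admissibleE[OF G] by blast
  have N': "supp_in F (min N M)" "supp_in G (min N M)" using supp_in_mono[OF N] supp_in_mono[OF M]
      by simp_all
  have "supp_in (\<lambda>p. F p + G p) (min N M)"
    using N' unfolding supp_in_def by (metis add.left_neutral)
  moreover have "F p + G p \<in> cvs.span (S \<union> T)" for p
    using S T cvs.span_mono[of S "S \<union> T"] cvs.span_mono[of T "S \<union> T"] by (auto intro!: cvs.span_add)
  ultimately show ?thesis using S T by (auto simp: admissible_def cone_supp_def fin_span_def)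
qed

lemma admissible_cscale: "admissible F \<Longrightarrow> admissible (\<lambda>p. c *c F p)"
proof -
  assume F: "admissible F"
  obtain N S where N: "supp_in F N" and S: "finite S" "\<And>q. F q \<in> cvs.span S"
      using admissibleE[OF F] by blast
  have "supp_in (\<lambda>p. c *c F p) N" using N by (auto simp: supp_in_def)
  moreover have "c *c F p \<in> cvs.span S" for p using S by (auto intro!: cvs.span_scale)
  ultimately show ?thesis using S by (auto simp: admissible_def cone_supp_def fin_span_def)
qed

lemma admissible_image: "clinear f \<Longrightarrow> admissible F \<Longrightarrow> admissible (\<lambda>p. f (F p))"
proof -
  assume f: "clinear f" and F: "admissible F"
  obtain N S where N: "supp_in F N" and S: "finite S" "\<And>q. F q \<in> cvs.span S"
      using admissibleE[OF F] by blast
  have "supp_in (\<lambda>p. f (F p)) N" using N clinear_zero[OF f] unfolding supp_in_def by metis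
  moreover have "f (F p) \<in> cvs.span (f ` S)" for p
    using S(2)[of p]
        by (metis (no_types, lifting) f image_eqI linear_iff_module_hom module_hom.span_image)
  ultimately show ?thesis using S by (auto simp: admissible_def cone_supp_def fin_span_def)
qed

lemma cone_supp_add: "cone_supp F \<Longrightarrow> cone_supp G \<Longrightarrow> cone_supp (\<lambda>p. F p + (G p :: 'a::monoid_add))"
proof -
  assume "cone_supp F" "cone_supp G"
  then obtain N M where N: "supp_in F N" and M: "supp_in G M" by (auto simp: cone_supp_def)
  have N': "supp_in F (min N M)" "supp_in G (min N M)" using supp_in_mono[OF N] supp_in_mono[OF M]
      by simp_all
  have "supp_in (\<lambda>p. F p + G p) (min N M)"
    using N' unfolding supp_in_def by (metis add.left_neutral)
  then show ?thesis by (auto simp: cone_supp_def)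
qed

lemma cone_supp_image:
  assumes f0: "f 0 = 0" and F: "cone_supp F"
  shows "cone_supp (\<lambda>p. f (F p))"
proof -
  obtain N where N: "supp_in F N" using F by (auto simp: cone_supp_def)
  have "supp_in (\<lambda>p. f (F p)) N" using N unfolding supp_in_def by (metis f0)
  then show ?thesis by (auto simp: cone_supp_def)
qed

lemma fin_span_add: "fin_span F \<Longrightarrow> fin_span G \<Longrightarrow> fin_span (\<lambda>p. F p + G p)"
proof -
  assume "fin_span F" "fin_span G"
  then obtain S T where S0: "finite S" "range F \<subseteq> cvs.span S" and T0: "finite T" "range G \<subseteq>
      cvs.span T"
    unfolding fin_span_def by blast
  then have S: "finite S" "\<And>q. F q \<in> cvs.span S" and T: "finite T" "\<And>q. G q \<in> cvs.span T" by auto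
  have "F p + G p \<in> cvs.span (S \<union> T)" for p
    using S T cvs.span_mono[of S "S \<union> T"] cvs.span_mono[of T "S \<union> T"] by (auto intro!: cvs.span_add)
  then show ?thesis using S T unfolding fin_span_def by (intro exI[of _ "S \<union> T"]) auto
qed

lemma fin_span_image: "clinear f \<Longrightarrow> fin_span F \<Longrightarrow> fin_span (\<lambda>p. f (F p))"
proof -
  assume f: "clinear f" and "fin_span F"
  then obtain S where S0: "finite S" "range F \<subseteq> cvs.span S" unfolding fin_span_def by blast
  then have S: "finite S" "\<And>q. F q \<in> cvs.span S" by auto
  have "f (F p) \<in> cvs.span (f ` S)" for p
    using S(2)[of p]
        by (metis (no_types, lifting) f image_eqI linear_iff_module_hom module_hom.span_image)
  then show ?thesis using S unfolding fin_span_def by (intro exI[of _ "f ` S"]) auto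
qed

lemma fin_span_zero: "fin_span (\<lambda>_. 0)"
  by (auto simp: fin_span_def cvs.span_zero)

lemma admissible_zero: "admissible (\<lambda>_. 0)"
  by (auto simp: admissible_def cone_supp_def fin_span_def cvs.span_zero)

lemma conv_add:
  assumes K: "cone_kernel K" and F: "admissible F" and G: "admissible G"
  shows "conv K (\<lambda>p. F p + G p) = (\<lambda>p. conv K F p + conv K G p)"
proof
  fix p
  have lin: "clinear K" using K by (simp add: cone_kernel_def)
  show "conv K (\<lambda>p. F p + G p) p = conv K F p + conv K G p"
    unfolding conv_def
    by (simp add: clinear_add[OF lin] plus_fun_apply supp_sum_add finite_conv_terms[OF K F]
        finite_conv_terms[OF K G])
qed

lemma conv_cscale:
  assumes K: "cone_kernel K" and F: "admissible F"
  shows "conv K (\<lambda>p. c *c F p) = (\<lambda>p. c *c conv K F p)"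
proof
  fix p
  have lin: "clinear K" using K by (simp add: cone_kernel_def)
  show "conv K (\<lambda>p. c *c F p) p = c *c conv K F p"
    unfolding conv_def
    by (simp add: clinear_scale[OF lin] cscale_fun_apply
        clinear_supp_sum[OF clinear_cscale finite_conv_terms[OF K F]])
qed

lemma finite_conv_conv_terms:
  assumes L: "cone_kernel L" and M: "admissible_kernel M" and G: "admissible G"
  shows "finite {(r,q). L (M (G q) (r - q)) (p - r) \<noteq> 0}"
proof -
  obtain N S where N: "supp_in G N" and S: "finite S" "\<And>q. G q \<in> cvs.span S"
      using admissibleE[OF G] by blast
  obtain NM where NM: "\<forall>e\<in>cvs.span S. supp_in (M e) NM" using uniform_supp_in[OF _ S(1), of M] M
      by (auto simp: admissible_kernel_def)
  obtain T where T: "finite T" "\<forall>e\<in>cvs.span S. \<forall>p. M e p \<in> cvs.span T"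
      using uniform_fin_span[OF M S(1)] by blast
  obtain NL where NL: "\<forall>e\<in>cvs.span T. supp_in (L e) NL" using uniform_supp_in[OF L T(1)] by blast
  have linL: "clinear L" using L by (simp add: cone_kernel_def)
  have linM: "clinear M" using M by (simp add: cone_kernel_def admissible_kernel_def)
  have "{(r,q). L (M (G q) (r - q)) (p - r) \<noteq> 0} \<subseteq> (\<lambda>(x,y). (x + y, x)) ` {(x,y). x \<in> C N \<and> y \<in> C
      NM \<and> p - x - y \<in> C NL}"
  proof safe
    fix r q assume h: "L (M (G q) (r - q)) (p - r) \<noteq> 0"
    then have h1: "M (G q) (r - q) \<noteq> 0" using clinear_zero[OF linL] by auto
    then have "G q \<noteq> 0" using clinear_zero[OF linM] by auto
    then have "q \<in> C N" using N by (simp add: supp_in_def)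
    moreover have "r - q \<in> C NM" using NM S(2)[of q] h1 by (simp add: supp_in_def)
    moreover have "p - r \<in> C NL" using NL T(2) S(2)[of q] h unfolding supp_in_def by blast
    ultimately show "(r, q) \<in> (\<lambda>(x,y). (x + y, x)) ` {(x,y). x \<in> C N \<and> y \<in> C NM \<and> p - x - y \<in> C NL}"
      by (auto intro!: image_eqI[where x="(q, r - q)"] simp: diff_diff_eq)
  qed
  then show ?thesis using cone_triple_finite finite_subset by blast
qed

lemma conv_assoc_at:
  assumes L: "clinear L"
    and fin1: "\<And>r. finite {q. M (G q) (r - q) \<noteq> 0}"
    and fin2: "finite {(r,q). L (M (G q) (r - q)) (p - r) \<noteq> 0}"
  shows "conv L (conv M G) p = conv (\<lambda>e. conv L (M e)) G p"
proof -
  have "conv L (conv M G) p = supp_sum (\<lambda>r. supp_sum (\<lambda>q. L (M (G q) (r - q)) (p - r)))"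
    unfolding conv_def by (simp add: clinear_supp_sum[OF clinear_fun_app[OF L] fin1])
  also have "\<dots> = supp_sum (\<lambda>q. supp_sum (\<lambda>r. L (M (G q) (r - q)) (p - r)))"
    by (rule supp_sum_swap) (use fin2 in simp)
  also have "\<dots> = conv (\<lambda>e. conv L (M e)) G p"
    unfolding conv_def
  proof (rule supp_sum_cong)
    fix q
    show "supp_sum (\<lambda>r. L (M (G q) (r - q)) (p - r)) = supp_sum (\<lambda>s. L (M (G q) s) (p - q - s))"
      by (subst supp_sum_shift[symmetric, where k=q]) (simp add: algebra_simps)
  qed
  finally show ?thesis .
qed

lemma conv_assoc:
  assumes L: "cone_kernel L" and M: "admissible_kernel M" and G: "admissible G"
  shows "conv L (conv M G) = conv (\<lambda>e. conv L (M e)) G"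
proof
  fix p
  have M': "cone_kernel M" using M by (simp add: admissible_kernel_def)
  show "conv L (conv M G) p = conv (\<lambda>e. conv L (M e)) G p"
    by (rule conv_assoc_at)
        (use L finite_conv_terms[OF M' G] finite_conv_conv_terms[OF L M G] in \<open>auto simp:
        cone_kernel_def\<close>)
qed

lemma cone_kernel_conv:
  assumes L: "cone_kernel L" and M: "admissible_kernel M"
  shows "cone_kernel (\<lambda>e. conv L (M e))"
proof -
  have M': "cone_kernel M" using M by (simp add: admissible_kernel_def)
  have linM: "clinear M" using M' by (simp add: cone_kernel_def)
  have M_adm: "admissible (M e)" for e using M
      by (simp add: admissible_kernel_def cone_kernel_def admissible_def)
  have "clinear (\<lambda>e. conv L (M e))"
    by (rule clinearI)
        (simp_all add: clinear_add[OF linM] clinear_scale[OF linM] plus_fun_apply[abs_def]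
        cscale_fun_apply[abs_def] conv_add[OF L M_adm M_adm] conv_cscale[OF L M_adm] fun_eq_iff)
  then show ?thesis using cone_supp_conv[OF L M_adm] by (simp add: cone_kernel_def)
qed

lemma admissible_kernel_conv:
  assumes L: "admissible_kernel L" and M: "admissible_kernel M"
  shows "admissible_kernel (\<lambda>e. conv L (M e))"
  using cone_kernel_conv[OF _ M] L fin_span_conv[OF L] M
      by (auto simp: admissible_kernel_def cone_kernel_def admissible_def)

lemma admissible_kernel_delta: "admissible_kernel delta"
proof -
  have "clinear delta" by (rule clinearI)
      (simp_all add: delta_def fun_eq_iff plus_fun_apply cscale_fun_apply)
  moreover have "supp_in (delta e) 0" for e :: 'a using zero_in_cone
      by (simp add: supp_in_def delta_def)
  moreover have "fin_span (delta e)" for e :: 'a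
    unfolding fin_span_def by (rule exI[of _ "{e}"])
        (auto simp: delta_def cvs.span_zero cvs.span_base)
  ultimately show ?thesis unfolding admissible_kernel_def cone_kernel_def cone_supp_def by blast
qed

lemma conv_delta:
  assumes "clinear K"
  shows "conv K (delta e) = K e"
proof
  fix p show "conv K (delta e) p = K e p"
    unfolding conv_def by (subst supp_sum_single[where a=0])
        (auto simp: delta_def clinear_zero[OF assms])
qed

lemma conv_delta_kernel:
  assumes "f 0 = 0"
  shows "conv (\<lambda>e. delta (f e)) G = (\<lambda>p. f (G p))"
proof
  fix p show "conv (\<lambda>e. delta (f e)) G p = f (G p)"
    unfolding conv_def by (subst supp_sum_single[where a=p]) (auto simp: delta_def assms)
qed

lemma admissible_delta: "admissible (delta e)"
  using admissible_kernel_delta unfolding admissible_kernel_def cone_kernel_def admissible_def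
      by blast

lemma cone_kernel_clinear: "cone_kernel K \<Longrightarrow> clinear K"
  by (simp add: cone_kernel_def)

lemma admissible_kernel_cone_kernel: "admissible_kernel K \<Longrightarrow> cone_kernel K"
  by (simp add: admissible_kernel_def)

lemma admissible_kernel_admissible: "admissible_kernel K \<Longrightarrow> admissible (K e)"
  by (simp add: admissible_kernel_def cone_kernel_def admissible_def)

lemma cone_kernel_comp: "cone_kernel K \<Longrightarrow> clinear f \<Longrightarrow> cone_kernel (\<lambda>e. K (f e))"
  by (simp add: cone_kernel_def clinear_comp)

lemma admissible_kernel_comp: "admissible_kernel K \<Longrightarrow> clinear f \<Longrightarrow> admissible_kernel (\<lambda>e. K (f e))"
  by (simp add: admissible_kernel_def cone_kernel_def clinear_comp)

lemma cone_supp_clinear_zero: "clinear K \<Longrightarrow> cone_supp (K 0)"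
  by (simp add: clinear_zero cone_supp_def supp_in_def)

lemma fin_span_clinear_zero: "clinear K \<Longrightarrow> fin_span (K 0)"
  using fin_span_zero by (simp add: clinear_zero zero_fun_def)

lemma cone_supp_clinear_add:
  "clinear K \<Longrightarrow> cone_supp (K x) \<Longrightarrow> cone_supp (K y) \<Longrightarrow> cone_supp (K (x + y))"
  using cone_supp_add[of "K x" "K y"] by (simp add: clinear_add plus_fun_apply[abs_def])

lemma fin_span_clinear_add:
  "clinear K \<Longrightarrow> fin_span (K x) \<Longrightarrow> fin_span (K y) \<Longrightarrow> fin_span (K (x + y))"
  using fin_span_add[of "K x" "K y"] by (simp add: clinear_add plus_fun_apply[abs_def])

lemma admissible_sum:
  "finite D \<Longrightarrow> (\<And>d. d \<in> D \<Longrightarrow> admissible (F d)) \<Longrightarrow> admissible (\<lambda>a. \<Sum>d\<in>D. F d a)"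
  by (induct D rule: finite_induct) (simp_all add: admissible_zero admissible_add)

end

section \<open>Series in one and in two variables\<close>

interpretation uni: cone_index "\<lambda>N::int. {N..}"
proof
  show "N \<le> M \<Longrightarrow> {M..} \<subseteq> {N..}" for N M :: int by auto
  show "x \<in> {N..} \<Longrightarrow> y \<in> {M..} \<Longrightarrow> x + y \<in> {N+M..}" for x y N M :: int by auto
  show "finite {(x,y). x \<in> {N..} \<and> y \<in> {M..} \<and> p - x - y \<in> {K..}}" for N M K p :: int
    by (rule finite_subset[of _ "{N..p-M-K} \<times> {M..p-N-K}"]) auto
  show "(0::int) \<in> {0..}" by simp
qed

text \<open>Exponents (a, b) of x1^a x2^b. Expansions F(x1 \<plusminus> x2) of series F bounded below, and series
  bounded below in x2 alone, are supported in such cones.\<close>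
interpretation bi: cone_index "\<lambda>N::int. {(a,b). N \<le> b \<and> N \<le> a + b}"
proof
  show "N \<le> M \<Longrightarrow> {(a,b). M \<le> b \<and> M \<le> a + b} \<subseteq> {(a,b). N \<le> b \<and> N \<le> a + b}" for N M :: int by auto
  show "x \<in> {(a,b). N \<le> b \<and> N \<le> a + b} \<Longrightarrow> y \<in> {(a,b). M \<le> b \<and> M \<le> a + b} \<Longrightarrow>
     x + y \<in> {(a,b). N + M \<le> b \<and> N + M \<le> a + b}" for x y :: "int \<times> int" and N M
    by (cases x, cases y) auto
  show "finite {(x,y). x \<in> {(a,b). N \<le> b \<and> N \<le> a + b} \<and> y \<in> {(a,b). M \<le> b \<and> M \<le> a + b}
     \<and> p - x - y \<in> {(a,b). K \<le> b \<and> K \<le> a + b}}" for N M K and p :: "int \<times> int"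
  proof (cases p)
    case (Pair p1 p2) note p = this
    show ?thesis
    proof (rule finite_subset)
    show "{(x,y). x \<in> {(a,b). N \<le> b \<and> N \<le> a + b} \<and> y \<in> {(a,b). M \<le> b \<and> M \<le> a + b}
     \<and> p - x - y \<in> {(a,b). K \<le> b \<and> K \<le> a + b}} \<subseteq>
      ({N - (p2 - M - K)..p1 + p2 - M - K - N} \<times> {N..p2 - M - K}) \<times>
          ({M - (p2 - N - K)..p1 + p2 - N - K - M} \<times> {M..p2 - N - K})"
      by (clarsimp simp: p)
  qed simp
  qed
  show "(0::int\<times>int) \<in> {(a,b). 0 \<le> b \<and> 0 \<le> a + b}" by (simp add: zero_prod_def)
qed

lemma lbounded_iff_cone_supp: "lbounded F \<longleftrightarrow> uni.cone_supp (F :: int \<Rightarrow> 'a::zero)"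
  unfolding lbounded_def uni.cone_supp_def uni.supp_in_def by (meson atLeast_iff not_le)

lemma fser_iff_admissible: "fser F \<longleftrightarrow> uni.admissible (F :: int \<Rightarrow> 'a::cvs)"
  unfolding fser_def uni.admissible_def uni.fin_span_def lbounded_iff_cone_supp by simp

lemma ext_eq_conv: "ext = conv"
  by (intro ext) (simp add: ext_def conv_def fsum_eq_supp_sum)

lemma delta0_eq_delta: "delta0 = delta"
  by (intro ext) (simp add: delta0_def delta_def)

text \<open>A kernel in one variable acting on the variable x1 (resp. x2) of two-variable series,
  and the expansion F(x1 + \<sigma> x2) in nonnegative powers of x2.\<close>
definition on_fst :: "('a \<Rightarrow> int \<Rightarrow> 'b::zero) \<Rightarrow> 'a \<Rightarrow> int \<times> int \<Rightarrow> 'b" where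
  "on_fst L e p = (if snd p = 0 then L e (fst p) else 0)"

definition on_snd :: "('a \<Rightarrow> int \<Rightarrow> 'b::zero) \<Rightarrow> 'a \<Rightarrow> int \<times> int \<Rightarrow> 'b" where
  "on_snd L e p = (if fst p = 0 then L e (snd p) else 0)"

definition expand :: "complex \<Rightarrow> (int \<Rightarrow> 'a::cvs) \<Rightarrow> int \<Rightarrow> int \<Rightarrow> 'a" where
  "expand \<sigma> F a b =
      (if 0 \<le> b then (\<sigma> ^ nat b * (of_int (a + b) gchoose nat b)) *c F (a + b) else 0)"

definition expand_kernel :: "complex \<Rightarrow> ('a \<Rightarrow> int \<Rightarrow> 'b::cvs) \<Rightarrow> 'a \<Rightarrow> int \<times> int \<Rightarrow> 'b" where
  "expand_kernel \<sigma> L e p = expand \<sigma> (L e) (fst p) (snd p)"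

lemma sub2_eq_expand: "sub2 = expand 1"
  by (intro ext) (simp add: sub2_def expand_def)

lemma subm2_eq_expand: "subm2 = expand (-1)"
  by (intro ext) (simp add: subm2_def expand_def)

lemma cone_kernel_on_fst:
  assumes "uni.cone_kernel L"
  shows "bi.cone_kernel (on_fst L)"
proof -
  have lin: "clinear L" using assms by (simp add: uni.cone_kernel_def)
  have "clinear (on_fst L)"
    by (rule clinear_funI) (auto simp: on_fst_def intro: clinear_if clinear_fun_app[OF lin])
  moreover have "bi.cone_supp (on_fst L e)" for e
  proof -
    obtain N where N: "uni.supp_in (L e) N" using assms
        by (auto simp: uni.cone_kernel_def uni.cone_supp_def)
    have "bi.supp_in (on_fst L e) (min N 0)" using N
        by (auto simp: bi.supp_in_def uni.supp_in_def on_fst_def)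
    then show ?thesis by (auto simp: bi.cone_supp_def)
  qed
  ultimately show ?thesis by (simp add: bi.cone_kernel_def)
qed

lemma admissible_kernel_on_fst:
  assumes "uni.admissible_kernel L"
  shows "bi.admissible_kernel (on_fst L)"
proof -
  have "bi.fin_span (on_fst L e)" for e
  proof -
    obtain T where T: "finite T" "range (L e) \<subseteq> cvs.span T" using assms
        by (auto simp: uni.admissible_kernel_def uni.fin_span_def)
    then have "range (on_fst L e) \<subseteq> cvs.span T" by (auto simp: on_fst_def cvs.span_zero)
    then show ?thesis using T by (auto simp: bi.fin_span_def)
  qed
  then show ?thesis using cone_kernel_on_fst[of L] assms unfolding uni.admissible_kernel_def
      bi.admissible_kernel_def by blast
qed

lemma cone_kernel_on_snd:
  assumes "uni.cone_kernel L"
  shows "bi.cone_kernel (on_snd L)"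
proof -
  have lin: "clinear L" using assms by (simp add: uni.cone_kernel_def)
  have "clinear (on_snd L)"
    by (rule clinear_funI) (auto simp: on_snd_def intro: clinear_if clinear_fun_app[OF lin])
  moreover have "bi.cone_supp (on_snd L e)" for e
  proof -
    obtain N where N: "uni.supp_in (L e) N" using assms
        by (auto simp: uni.cone_kernel_def uni.cone_supp_def)
    have "bi.supp_in (on_snd L e) N" using N
        by (auto simp: bi.supp_in_def uni.supp_in_def on_snd_def)
    then show ?thesis by (auto simp: bi.cone_supp_def)
  qed
  ultimately show ?thesis by (simp add: bi.cone_kernel_def)
qed

lemma expand_add: "expand \<sigma> (\<lambda>n. F n + G n) a b = expand \<sigma> F a b + expand \<sigma> G a b"
  by (simp add: expand_def cscale_add_right)

lemma expand_cscale: "expand \<sigma> (\<lambda>n. c *c F n) a b = c *c expand \<sigma> F a b"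
  by (simp add: expand_def cscale_cscale mult.commute)

lemma expand_zero [simp]: "expand \<sigma> 0 a b = 0"
  by (simp add: expand_def cvs.scale_zero_right)

lemma admissible_kernel_expand_kernel:
  assumes "uni.admissible_kernel L"
  shows "bi.admissible_kernel (expand_kernel \<sigma> L)"
proof -
  have lin: "clinear L" using assms by (simp add: uni.admissible_kernel_def uni.cone_kernel_def)
  have "clinear (expand_kernel \<sigma> L)"
    by (rule clinear_funI, rule clinearI)
      (simp_all add: expand_kernel_def clinear_add[OF lin] clinear_scale[OF lin]
          plus_fun_apply[abs_def] cscale_fun_apply[abs_def] expand_add expand_cscale)
  moreover have "bi.cone_supp (expand_kernel \<sigma> L e)" for e
  proof -
    obtain N where N: "uni.supp_in (L e) N" using assms
        by (auto simp: uni.admissible_kernel_def uni.cone_kernel_def uni.cone_supp_def)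
    have "bi.supp_in (expand_kernel \<sigma> L e) (min N 0)" using N
        by (auto simp: bi.supp_in_def uni.supp_in_def expand_kernel_def expand_def)
    then show ?thesis by (auto simp: bi.cone_supp_def)
  qed
  moreover have "bi.fin_span (expand_kernel \<sigma> L e)" for e
  proof -
    obtain T where T: "finite T" "range (L e) \<subseteq> cvs.span T" using assms
        by (auto simp: uni.admissible_kernel_def uni.fin_span_def)
    then have "range (expand_kernel \<sigma> L e) \<subseteq> cvs.span T"
        by (auto simp: expand_kernel_def expand_def cvs.span_zero intro!: cvs.span_scale)
    then show ?thesis using T by (auto simp: bi.fin_span_def)
  qed
  ultimately show ?thesis by (simp add: bi.cone_kernel_def bi.admissible_kernel_def)
qed

lemma ext1_eq_conv: "ext1 L G a b = conv (on_fst L) (case_prod G) (a, b)"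
proof -
  have "conv (on_fst L) (case_prod G) (a, b) = supp_sum
      (\<lambda>c. on_fst L (case_prod G (c, b)) ((a, b) - (c, b)))"
    unfolding conv_def by (rule supp_sum_reindex[symmetric]) (auto simp: inj_def on_fst_def)
  then show ?thesis by (simp add: ext1_def fsum_eq_supp_sum on_fst_def)
qed

lemma ext2_eq_conv: "ext2 L G a b = conv (on_snd L) (case_prod G) (a, b)"
proof -
  have "conv (on_snd L) (case_prod G) (a, b) = supp_sum
      (\<lambda>d. on_snd L (case_prod G (a, d)) ((a, b) - (a, d)))"
    unfolding conv_def by (rule supp_sum_reindex[symmetric]) (auto simp: inj_def on_snd_def)
  then show ?thesis by (simp add: ext2_def fsum_eq_supp_sum on_snd_def)
qed

lemma ext12_eq_conv:
  assumes "clinear L"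
  shows "ext12 (\<lambda>e. expand \<sigma> (L e)) (M t) a b = conv (expand_kernel \<sigma> L) (on_fst M t) (a, b)"
proof -
  have "conv (expand_kernel \<sigma> L) (on_fst M t) (a, b) = supp_sum
      (\<lambda>c. expand_kernel \<sigma> L (on_fst M t (c, 0)) ((a, b) - (c, 0)))"
    unfolding conv_def by (rule supp_sum_reindex[symmetric])
      (auto simp: inj_def on_fst_def expand_kernel_def clinear_zero[OF assms] expand_zero)
  then show ?thesis by (simp add: ext12_def fsum_eq_supp_sum on_fst_def expand_kernel_def)
qed

text \<open>The coefficient of x1^a x2^b in (x1 + \<sigma> x2)^(a + b), expanded in nonnegative powers of x2.\<close>
definition expand_coeff :: "complex \<Rightarrow> int \<Rightarrow> int \<Rightarrow> complex" where
  "expand_coeff \<sigma> a b = (if 0 \<le> b then \<sigma> ^ nat b * (of_int (a + b) gchoose nat b) else 0)"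

lemma expand_eq_coeff: "expand \<sigma> F a b = expand_coeff \<sigma> a b *c F (a + b)"
  by (simp add: expand_def expand_coeff_def)

text \<open>(x1 + \<sigma> x2)^n expanded in two steps, as (x1 + \<sigma> x2)^(n - d) against (\<sigma> x2)^d, is
  Vandermonde's convolution.\<close>
lemma supp_sum_expand_coeff:
  "supp_sum (\<lambda>d. expand_coeff \<sigma> (a + d - n) (b - d) * expand_coeff \<sigma> (n - d) d) = expand_coeff \<sigma> a
      b"
proof (cases "0 \<le> b")
  case False
  then show ?thesis by (simp add: expand_coeff_def supp_sum_def)
next
  case True
  let ?t = "\<lambda>d. expand_coeff \<sigma> (a + d - n) (b - d) * expand_coeff \<sigma> (n - d) d"
  have "supp_sum ?t = supp_sum (\<lambda>k. ?t (int k))"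
  proof (rule supp_sum_reindex[symmetric])
    show "{d. ?t d \<noteq> 0} \<subseteq> range int"
    proof
      fix d assume "d \<in> {d. ?t d \<noteq> 0}"
      then have "0 \<le> d" by (auto simp: expand_coeff_def split: if_splits)
      then show "d \<in> range int" by (metis nonneg_int_cases rangeI)
    qed
  qed (simp add: inj_def)
  also have "\<dots> = (\<Sum>k=0..nat b. ?t (int k))"
    by (rule supp_sum_eq_sum) (auto simp: expand_coeff_def)
  also have "\<dots> =
      (\<Sum>k=0..nat b. \<sigma> ^ nat b * ((of_int n gchoose k) * (of_int (a + b - n) gchoose (nat b - k))))"
  proof (rule sum.cong)
    fix k assume "k \<in> {0..nat b}"
    then have k: "int k \<le> b" "nat (b - int k) = nat b - k"
      and pw: "\<sigma> ^ (nat b - k) * \<sigma> ^ k = \<sigma> ^ nat b"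
      using True by (auto simp flip: power_add)
    have "?t (int k) = (\<sigma> ^ (nat b - k) * \<sigma> ^ k) *
        ((of_int n gchoose k) * (of_int (a + b - n) gchoose (nat b - k)))"
      using k by (simp add: expand_coeff_def algebra_simps)
    then show "?t (int k) = \<sigma> ^ nat b *
        ((of_int n gchoose k) * (of_int (a + b - n) gchoose (nat b - k)))"
      by (simp only: pw)
  qed simp
  also have "\<dots> = expand_coeff \<sigma> a b"
    using gbinomial_Vandermonde[of "of_int n :: complex" "of_int (a + b - n)" "nat b"] True
    by (simp add: expand_coeff_def flip: sum_distrib_left)
  finally show ?thesis .
qed

lemma supp_sum_cscale_left:
  assumes "finite {d. c d \<noteq> 0}"
  shows "supp_sum (\<lambda>d. c d *c x) = supp_sum c *c (x :: 'a::cvs)"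
proof -
  have "supp_sum (\<lambda>d. c d *c x) = (\<Sum>d\<in>{d. c d \<noteq> 0}. c d *c x)"
    by (rule supp_sum_eq_sum) (use assms in auto)
  then show ?thesis by (simp add: supp_sum_def cvs.scale_sum_left)
qed

lemma conv_expand_kernel_expand:
  fixes L :: "'a::cvs \<Rightarrow> int \<Rightarrow> 'b::cvs" and F :: "int \<Rightarrow> 'a"
  assumes lin: "clinear L" and fin: "finite {n. L (F n) (a + b - n) \<noteq> 0}"
  shows "conv (expand_kernel \<sigma> L) (\<lambda>p. expand \<sigma> F (fst p) (snd p)) (a, b) = expand \<sigma> (conv L F) a b"
proof -
  define X where "X n = L (F n) (a + b - n)" for n
  define g where "g n d = (expand_coeff \<sigma> (a + d - n) (b - d) * expand_coeff \<sigma> (n - d) d) *c X n"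
      for n d
  have Ls: "L (k *c y) x = k *c L y x" for k y x using clinear_scale[OF lin]
      by (simp add: cscale_fun_apply)
  have "conv (expand_kernel \<sigma> L) (\<lambda>p. expand \<sigma> F (fst p) (snd p)) (a, b) = supp_sum
      (\<lambda>q. g (fst q + snd q) (snd q))"
    unfolding conv_def
    by (rule supp_sum_cong)
        (auto simp: g_def X_def expand_kernel_def expand_eq_coeff Ls cscale_cscale
        algebra_simps split: prod.splits)
  also have "\<dots> = supp_sum (\<lambda>q. g (fst q) (snd q))"
  proof -
    have "range (\<lambda>q::int \<times> int. (fst q - snd q, snd q)) = UNIV"
      by (rule surjI[where f="\<lambda>q. (fst q + snd q, snd q)"]) auto
    then show ?thesis
      using supp_sum_reindex[of "\<lambda>q. (fst q - snd q, snd q)" "\<lambda>q. g (fst q + snd q) (snd q)"]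
      by (simp add: inj_def prod_eq_iff)
  qed
  also have "\<dots> = supp_sum (\<lambda>n. supp_sum (\<lambda>d. g n d))"
  proof (rule supp_sum_pair[symmetric])
    show "finite {(n, d). g n d \<noteq> 0}"
      by (rule finite_subset[of _ "{n. X n \<noteq> 0} \<times> {0..b}"])
        (use fin in \<open>auto simp: g_def X_def expand_coeff_def\<close>)
  qed
  also have "\<dots> = supp_sum (\<lambda>n. expand_coeff \<sigma> a b *c X n)"
  proof (rule supp_sum_cong)
    fix n
    have "finite {d. expand_coeff \<sigma> (a + d - n) (b - d) * expand_coeff \<sigma> (n - d) d \<noteq> 0}"
      by (rule finite_subset[of _ "{0..b}"]) (auto simp: expand_coeff_def)
    then show "supp_sum (\<lambda>d. g n d) = expand_coeff \<sigma> a b *c X n"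
      unfolding g_def by (simp add: supp_sum_cscale_left supp_sum_expand_coeff)
  qed
  also have "\<dots> = expand_coeff \<sigma> a b *c supp_sum X"
    by (rule clinear_supp_sum[OF clinear_cscale, symmetric]) (use fin in \<open>simp add: X_def\<close>)
  finally show ?thesis by (simp add: expand_eq_coeff conv_def X_def[abs_def])
qed

lemma conv_on_fst_on_fst:
  assumes lin: "clinear L"
  shows "conv (on_fst L) (on_fst M e) = on_fst (\<lambda>e. conv L (M e)) e"
proof
  fix p :: "int \<times> int"
  obtain a b where p: "p = (a, b)" by (cases p)
  have L0: "L 0 x = 0" for x using clinear_zero[OF lin] by simp
  have "conv (on_fst L) (on_fst M e) (a, b) = supp_sum
      (\<lambda>c. on_fst L (on_fst M e (c, 0)) ((a, b) - (c, 0)))"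
    unfolding conv_def by (rule supp_sum_reindex[symmetric]) (auto simp: inj_def on_fst_def L0)
  then show "conv (on_fst L) (on_fst M e) p = on_fst (\<lambda>e. conv L (M e)) e p"
    by (simp add: p on_fst_def conv_def)
qed

text \<open>Vertex operators give kernels whose values need not span a finite-dimensional space, so
  conv_assoc does not apply when the inner kernel is one; finiteness is checked directly.\<close>
lemma conv_on_fst_conv_on_snd:
  assumes R: "uni.cone_kernel R" and Y: "uni.cone_kernel LY" and G: "bi.admissible G"
  shows "conv (on_fst R) (conv (on_snd LY) G) = conv (\<lambda>e. conv (on_fst R) (on_snd LY e)) G"
proof
  fix p :: "int \<times> int"
  obtain p1 p2 where p: "p = (p1, p2)" by (cases p)
  have linR: "clinear R" and linY: "clinear LY" using R Y by (simp_all add: uni.cone_kernel_clinear)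
  have R0: "R 0 x = 0" for x using clinear_zero[OF linR] by simp
  have Y0: "LY 0 x = 0" for x using clinear_zero[OF linY] by simp
  obtain N S where N: "bi.supp_in G N" and S: "finite S" "\<And>q. G q \<in> cvs.span S"
      using bi.admissibleE[OF G] by blast
  obtain NY where NY: "\<forall>e\<in>cvs.span S. uni.supp_in (LY e) NY" using uni.uniform_supp_in[OF Y S(1)]
      by blast
  have "\<forall>d. \<exists>M. \<forall>w\<in>cvs.span ((\<lambda>g. LY g (p2 - d)) ` S). uni.supp_in (R w) M"
    using uni.uniform_supp_in[OF R] S(1) by blast
  then obtain NR where NR: "\<And>d. \<forall>w\<in>cvs.span ((\<lambda>g. LY g (p2 - d)) ` S). uni.supp_in (R w) (NR d)"
      by metis
  have fin2: "finite {(r, q). on_fst R (on_snd LY (G q) (r - q)) (p - r) \<noteq> 0}"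
  proof (rule finite_subset)
    show "{(r, q). on_fst R (on_snd LY (G q) (r - q)) (p - r) \<noteq> 0} \<subseteq>
      (\<lambda>(d, c). ((c, p2), (c, d))) ` (SIGMA d:{N..p2 - NY}. {N - d..p1 - NR d})"
    proof safe
      fix r1 r2 c d
      assume h: "on_fst R (on_snd LY (G (c, d)) ((r1, r2) - (c, d))) (p - (r1, r2)) \<noteq> 0"
      then have r2: "r2 = p2" and r1: "r1 = c" and h1: "R (LY (G (c, d)) (p2 - d)) (p1 - c) \<noteq> 0"
        by (auto simp: on_fst_def on_snd_def p R0 split: if_splits)
      have h2: "LY (G (c, d)) (p2 - d) \<noteq> 0" using h1 R0 by auto
      have "G (c, d) \<noteq> 0" using h2 Y0 by auto
      then have cd: "N \<le> d" "N \<le> c + d" using N by (auto simp: bi.supp_in_def)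
      have "p2 - d \<ge> NY" using NY S(2)[of "(c, d)"] h2 by (auto simp: uni.supp_in_def)
      moreover have "LY (G (c, d)) (p2 - d) \<in> cvs.span ((\<lambda>g. LY g (p2 - d)) ` S)"
        using S(2)[of "(c, d)"] clinear_fun_app[OF linY, of "p2 - d"]
        by (metis (no_types, lifting) image_eqI linear_iff_module_hom module_hom.span_image)
      then have "p1 - c \<ge> NR d" using NR[of d] h1 by (auto simp: uni.supp_in_def)
      ultimately show "((r1, r2), c, d) \<in> (\<lambda>(d, c). ((c, p2), (c, d))) `
          (SIGMA d:{N..p2 - NY}. {N - d..p1 - NR d})"
        using cd by (auto simp: r1 r2 intro!: image_eqI[where x="(d, c)"])
    qed
    show "finite ((\<lambda>(d, c). ((c, p2), (c, d))) ` (SIGMA d:{N..p2 - NY}. {N - d..p1 - NR d}))"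
      by (intro finite_imageI finite_SigmaI) auto
  qed
  show "conv (on_fst R) (conv (on_snd LY) G) p = conv (\<lambda>e. conv (on_fst R) (on_snd LY e)) G p"
    by (rule bi.conv_assoc_at)
        (use cone_kernel_on_fst[OF R] bi.finite_conv_terms[OF cone_kernel_on_snd[OF Y] G] fin2 in
        \<open>auto simp: bi.cone_kernel_def\<close>)
qed

lemma conv_on_fst_on_snd:
  assumes "clinear R"
  shows "conv (on_fst R) (on_snd L e) (a, b) = R (L e b) a"
proof -
  have R0: "R 0 x = 0" for x using clinear_zero[OF assms] by simp
  show ?thesis unfolding conv_def
    by (subst supp_sum_single[where a="(0, b)"]) (auto simp: on_fst_def on_snd_def R0)
qed

lemma on_fst_delta: "on_fst (\<lambda>e. delta (f e)) e = delta (f e)"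
  by (rule ext) (auto simp: on_fst_def delta_def zero_prod_def)

lemma expand_delta: "expand \<sigma> (delta x) a b = delta x (a, b)"
  by (auto simp: expand_def delta_def zero_prod_def cvs.scale_zero_right cscale_one
      gbinomial_0_left simp flip: of_int_add)

lemma conv_slice_fst: "conv L (\<lambda>a. H (a, b)) a = conv (on_fst L) H (a, b)"
  using ext1_eq_conv[of L "curry H" a b] by (simp add: ext1_def conv_def fsum_eq_supp_sum)

lemma clinear_expand: "clinear f \<Longrightarrow> f (expand \<sigma> F a b) = expand \<sigma> (\<lambda>n. f (F n)) a b"
  by (simp add: expand_def clinear_scale clinear_zero)

lemma admissible_row:
  assumes "bi.admissible G"
  shows "uni.admissible (\<lambda>a. G (a, d))"
proof -
  obtain N S where N: "bi.supp_in G N" and S: "finite S" "\<And>q. G q \<in> cvs.span S"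
    using bi.admissibleE[OF assms] by blast
  have "uni.supp_in (\<lambda>a. G (a, d)) (N - d)"
    using N unfolding uni.supp_in_def bi.supp_in_def by force
  moreover have "range (\<lambda>a. G (a, d)) \<subseteq> cvs.span S" using S by auto
  ultimately show ?thesis
    using S(1) unfolding uni.admissible_def uni.cone_supp_def uni.fin_span_def by (intro conjI exI)
qed

lemma admissible_slice:
  assumes L: "uni.cone_kernel L" and G: "bi.admissible G"
  shows "uni.admissible (\<lambda>a. conv (on_snd L) G (a, b))"
proof -
  have lin: "clinear L" by (rule uni.cone_kernel_clinear[OF L])
  have L0: "L 0 x = 0" for x using clinear_zero[OF lin] by simp
  obtain N S where N: "bi.supp_in G N" and S: "finite S" "\<And>q. G q \<in> cvs.span S"
      using bi.admissibleE[OF G] by blast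
  obtain NL where NL: "\<forall>e\<in>cvs.span S. uni.supp_in (L e) NL" using uni.uniform_supp_in[OF L S(1)]
      by blast
  define D where "D = {N..b - NL}"
  have e: "conv (on_snd L) G (a, b) = (\<Sum>d\<in>D. L (G (a, d)) (b - d))" for a
  proof -
    have "conv (on_snd L) G (a, b) = supp_sum (\<lambda>d. on_snd L (G (a, d)) ((a, b) - (a, d)))"
      unfolding conv_def by (rule supp_sum_reindex[symmetric]) (auto simp: inj_def on_snd_def L0)
    also have "\<dots> = supp_sum (\<lambda>d. L (G (a, d)) (b - d))" by (simp add: on_snd_def)
    also have "\<dots> = (\<Sum>d\<in>D. L (G (a, d)) (b - d))"
    proof (rule supp_sum_eq_sum)
      show "finite D" by (simp add: D_def)
      show "{d. L (G (a, d)) (b - d) \<noteq> 0} \<subseteq> D"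
      proof
        fix d assume h: "d \<in> {d. L (G (a, d)) (b - d) \<noteq> 0}"
        then have "G (a, d) \<noteq> 0" using L0 by auto
        then have "N \<le> d" using N by (auto simp: bi.supp_in_def)
        moreover have "NL \<le> b - d" using NL S(2)[of "(a, d)"] h by (auto simp: uni.supp_in_def)
        ultimately show "d \<in> D" by (simp add: D_def)
      qed
    qed
    finally show ?thesis .
  qed
  have "uni.admissible (\<lambda>a. \<Sum>d\<in>D. L (G (a, d)) (b - d))"
  proof (rule uni.admissible_sum)
    show "finite D" by (simp add: D_def)
    fix d
    show "uni.admissible (\<lambda>a. L (G (a, d)) (b - d))"
      by (rule uni.admissible_image[OF clinear_fun_app[OF lin] admissible_row[OF G]])
  qed
  moreover have "(\<lambda>a. conv (on_snd L) G (a, b)) = (\<lambda>a. \<Sum>d\<in>D. L (G (a, d)) (b - d))"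
    by (rule ext) (rule e)
  ultimately show ?thesis by simp
qed

definition one_tensor ::
  "('a \<Rightarrow> int \<Rightarrow> 'b) \<Rightarrow> ('c::cvs, 'a::cvs) tensor \<Rightarrow> int \<Rightarrow> ('c, 'b::cvs) tensor" where
  "one_tensor L z n = tmap id (\<lambda>w. L w n) z"

definition tensor_one ::
  "('a \<Rightarrow> int \<Rightarrow> 'b) \<Rightarrow> ('a::cvs, 'c::cvs) tensor \<Rightarrow> int \<Rightarrow> ('b::cvs, 'c) tensor" where
  "tensor_one L z n = tmap (\<lambda>w. L w n) id z"

lemma one_tensor_tprod: "clinear L \<Longrightarrow> one_tensor L (tprod v w) = (\<lambda>n. tprod v (L w n))"
  by (rule ext) (simp add: one_tensor_def clinear_fun_app clinear_id)

lemma tensor_one_tprod: "clinear L \<Longrightarrow> tensor_one L (tprod v w) = (\<lambda>n. tprod (L v n) w)"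
  by (rule ext) (simp add: tensor_one_def clinear_fun_app clinear_id)

lemma clinear_one_tensor: "clinear L \<Longrightarrow> clinear (one_tensor L)"
  unfolding one_tensor_def by (rule clinear_funI)
      (simp add: clinear_tmap clinear_fun_app clinear_id)

lemma clinear_tensor_one: "clinear L \<Longrightarrow> clinear (tensor_one L)"
  unfolding tensor_one_def by (rule clinear_funI)
      (simp add: clinear_tmap clinear_fun_app clinear_id)

lemma cone_kernel_one_tensor:
  assumes L: "uni.cone_kernel L"
  shows "uni.cone_kernel (one_tensor L)"
proof -
  have lin: "clinear L" by (rule uni.cone_kernel_clinear[OF L])
  have "uni.cone_supp (one_tensor L z)" for z
  proof (induct z rule: tensor_induct)
    case zero
    show ?case by (rule uni.cone_supp_clinear_zero[OF clinear_one_tensor[OF lin]])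
  next
    case (tprod a b) show ?case unfolding one_tensor_tprod[OF lin]
      by (rule uni.cone_supp_image) (use L in \<open>auto simp: uni.cone_kernel_def\<close>)
  next
    case (add x y) then show ?case
        by (rule uni.cone_supp_clinear_add[OF clinear_one_tensor[OF lin]])
  qed
  then show ?thesis unfolding uni.cone_kernel_def using clinear_one_tensor[OF lin] by blast
qed

lemma cone_kernel_tensor_one:
  assumes L: "uni.cone_kernel L"
  shows "uni.cone_kernel (tensor_one L)"
proof -
  have lin: "clinear L" by (rule uni.cone_kernel_clinear[OF L])
  have "uni.cone_supp (tensor_one L z)" for z
  proof (induct z rule: tensor_induct)
    case zero
    show ?case by (rule uni.cone_supp_clinear_zero[OF clinear_tensor_one[OF lin]])
  next
    case (tprod a b) show ?case unfolding tensor_one_tprod[OF lin]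
      by (rule uni.cone_supp_image[where f="\<lambda>x. tprod x b"])
          (use L in \<open>auto simp: uni.cone_kernel_def\<close>)
  next
    case (add x y) then show ?case
        by (rule uni.cone_supp_clinear_add[OF clinear_tensor_one[OF lin]])
  qed
  then show ?thesis unfolding uni.cone_kernel_def using clinear_tensor_one[OF lin] by blast
qed

lemma admissible_kernel_one_tensor:
  assumes L: "uni.admissible_kernel L"
  shows "uni.admissible_kernel (one_tensor L)"
proof -
  have L': "uni.cone_kernel L" by (rule uni.admissible_kernel_cone_kernel[OF L])
  have lin: "clinear L" by (rule uni.cone_kernel_clinear[OF L'])
  have "uni.fin_span (one_tensor L z)" for z
  proof (induct z rule: tensor_induct)
    case zero
    show ?case by (rule uni.fin_span_clinear_zero[OF clinear_one_tensor[OF lin]])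
  next
    case (tprod a b) show ?case unfolding one_tensor_tprod[OF lin]
      by (rule uni.fin_span_image[OF clinear_tprod_right])
          (use L in \<open>auto simp: uni.admissible_kernel_def\<close>)
  next
    case (add x y) then show ?case by (rule uni.fin_span_clinear_add[OF clinear_one_tensor[OF lin]])
  qed
  then show ?thesis unfolding uni.admissible_kernel_def using cone_kernel_one_tensor[OF L'] by blast
qed

lemma admissible_kernel_tensor_one:
  assumes L: "uni.admissible_kernel L"
  shows "uni.admissible_kernel (tensor_one L)"
proof -
  have L': "uni.cone_kernel L" by (rule uni.admissible_kernel_cone_kernel[OF L])
  have lin: "clinear L" by (rule uni.cone_kernel_clinear[OF L'])
  have "uni.fin_span (tensor_one L z)" for z
  proof (induct z rule: tensor_induct)
    case zero
    show ?case by (rule uni.fin_span_clinear_zero[OF clinear_tensor_one[OF lin]])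
  next
    case (tprod a b) show ?case unfolding tensor_one_tprod[OF lin]
      by (rule uni.fin_span_image[OF clinear_tprod_left])
          (use L in \<open>auto simp: uni.admissible_kernel_def\<close>)
  next
    case (add x y) then show ?case by (rule uni.fin_span_clinear_add[OF clinear_tensor_one[OF lin]])
  qed
  then show ?thesis unfolding uni.admissible_kernel_def using cone_kernel_tensor_one[OF L'] by blast
qed

lemma conv_one_tensor:
  assumes L: "uni.cone_kernel L" and M: "uni.admissible_kernel M"
  shows "conv (one_tensor L) (one_tensor M z) = one_tensor (\<lambda>w. conv L (M w)) z"
proof (rule tensor_clinear_eqI)
  show "clinear (\<lambda>z. conv (one_tensor L) (one_tensor M z))"
    using uni.cone_kernel_conv[OF cone_kernel_one_tensor[OF L] admissible_kernel_one_tensor[OF M]]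
        unfolding uni.cone_kernel_def by (rule conjunct1)
  have LM: "uni.cone_kernel (\<lambda>w. conv L (M w))" by (rule uni.cone_kernel_conv[OF L M])
  then show "clinear (one_tensor (\<lambda>w. conv L (M w)))" by (intro clinear_one_tensor)
      (simp add: uni.cone_kernel_def)
  fix a b
  have linL: "clinear L" and linM: "clinear M" using L M
      by (simp_all add: uni.cone_kernel_def uni.admissible_kernel_def)
  have M_adm: "uni.admissible (M b)" using M
      by (simp add: uni.admissible_kernel_def uni.cone_kernel_def uni.admissible_def)
  show "conv (one_tensor L) (one_tensor M (tprod a b)) = one_tensor (\<lambda>w. conv L (M w)) (tprod a b)"
  proof
    fix m
    have "conv (one_tensor L) (one_tensor M (tprod a b)) m = supp_sum
        (\<lambda>c. tprod a (L (M b c) (m - c)))"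
      by (simp add: conv_def one_tensor_tprod[OF linM] one_tensor_tprod[OF linL])
    also have "\<dots> = tprod a (conv L (M b) m)"
      unfolding conv_def
          by (rule clinear_supp_sum[OF clinear_tprod_right uni.finite_conv_terms[OF L M_adm],
          symmetric])
    also have "\<dots> = one_tensor (\<lambda>w. conv L (M w)) (tprod a b) m"
      using LM by (simp add: one_tensor_tprod uni.cone_kernel_def)
    finally show "conv (one_tensor L) (one_tensor M (tprod a b)) m = one_tensor (\<lambda>w. conv L (M w))
        (tprod a b) m" .
  qed
qed

lemma conv_tensor_one:
  assumes L: "uni.cone_kernel L" and M: "uni.admissible_kernel M"
  shows "conv (tensor_one L) (tensor_one M z) = tensor_one (\<lambda>w. conv L (M w)) z"
proof (rule tensor_clinear_eqI)
  show "clinear (\<lambda>z. conv (tensor_one L) (tensor_one M z))"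
    using uni.cone_kernel_conv[OF cone_kernel_tensor_one[OF L] admissible_kernel_tensor_one[OF M]]
        unfolding uni.cone_kernel_def by (rule conjunct1)
  have LM: "uni.cone_kernel (\<lambda>w. conv L (M w))" by (rule uni.cone_kernel_conv[OF L M])
  then show "clinear (tensor_one (\<lambda>w. conv L (M w)))" by (intro clinear_tensor_one)
      (simp add: uni.cone_kernel_def)
  fix a b
  have linL: "clinear L" and linM: "clinear M" using L M
      by (simp_all add: uni.cone_kernel_def uni.admissible_kernel_def)
  have M_adm: "uni.admissible (M a)" using M
      by (simp add: uni.admissible_kernel_def uni.cone_kernel_def uni.admissible_def)
  show "conv (tensor_one L) (tensor_one M (tprod a b)) = tensor_one (\<lambda>w. conv L (M w)) (tprod a b)"
  proof
    fix m
    have "conv (tensor_one L) (tensor_one M (tprod a b)) m = supp_sum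
        (\<lambda>c. tprod (L (M a c) (m - c)) b)"
      by (simp add: conv_def tensor_one_tprod[OF linM] tensor_one_tprod[OF linL])
    also have "\<dots> = tprod (conv L (M a) m) b"
      unfolding conv_def
          by (rule clinear_supp_sum[OF clinear_tprod_left uni.finite_conv_terms[OF L M_adm],
              symmetric])
    also have "\<dots> = tensor_one (\<lambda>w. conv L (M w)) (tprod a b) m"
      using LM by (simp add: tensor_one_tprod uni.cone_kernel_def)
    finally show "conv (tensor_one L) (tensor_one M (tprod a b)) m = tensor_one (\<lambda>w. conv L (M w))
        (tprod a b) m" .
  qed
qed

lemma one_tensor_delta: "one_tensor delta z = delta z"
proof
  fix m :: int
  show "one_tensor delta z m = delta z m"
  proof (cases "m = 0")
    case True then show ?thesis using tmap_id by (simp add: one_tensor_def delta_def id_def)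
  next
    case False
    then show ?thesis using False by (simp add: one_tensor_def delta_def tmap_zero_right clinear_id)
  qed
qed

lemma tensor_one_delta: "tensor_one delta z = delta z"
proof
  fix m :: int
  show "tensor_one delta z m = delta z m"
  proof (cases "m = 0")
    case True then show ?thesis using tmap_id by (simp add: tensor_one_def delta_def id_def)
  next
    case False
    then show ?thesis using False by (simp add: tensor_one_def delta_def tmap_zero_left clinear_id)
  qed
qed

section \<open>The substitution x \<mapsto> -x\<close>

definition alt_sign :: "int \<Rightarrow> complex" where
  "alt_sign n = (if even n then 1 else -1)"

lemma negx_eq_alt_sign: "negx F n = alt_sign n *c (F n :: 'a::cvs)"
  by (simp add: negx_def alt_sign_def cscale_one cscale_minus_one)

lemma alt_sign_add: "alt_sign (a + b) = alt_sign a * alt_sign b"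
  by (simp add: alt_sign_def)

lemma alt_sign_square: "alt_sign a * alt_sign a = 1"
  by (simp add: alt_sign_def)

lemma alt_sign_diff: "alt_sign (a - b) = alt_sign a * alt_sign b"
  by (simp add: alt_sign_def)

lemma alt_sign_nonzero [simp]: "alt_sign n \<noteq> 0"
  by (simp add: alt_sign_def)

lemma alt_sign_eq_power: "0 \<le> b \<Longrightarrow> alt_sign b = (-1) ^ nat b"
  by (simp add: alt_sign_def even_nat_iff)

lemma expand_alt_sign: "expand \<sigma> (\<lambda>n. alt_sign n *c F n) a b = alt_sign a *c expand (- \<sigma>) F a b"
proof (cases "0 \<le> b")
  case True
  have pw: "(- \<sigma>) ^ nat b = alt_sign b * \<sigma> ^ nat b"
  proof -
    have "(- \<sigma>) ^ nat b = (- 1) ^ nat b * \<sigma> ^ nat b" by (rule power_minus)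
    moreover have "(- 1) ^ nat b = alt_sign b" using alt_sign_eq_power[OF True] by simp
    ultimately show ?thesis by simp
  qed
  have e: "\<sigma> ^ nat b * C * alt_sign (a + b) = alt_sign a * ((- \<sigma>) ^ nat b * C)" for C
    unfolding pw alt_sign_add by (simp only: mult_ac)
  show ?thesis using True
    by (simp add: expand_def cscale_cscale e)
qed (simp add: expand_def cvs.scale_zero_right)

lemma alt_sign_diff_mult: "alt_sign (a - c) * alt_sign c = alt_sign a"
  by (simp add: alt_sign_diff mult.assoc alt_sign_square)

lemma conv_on_fst_alt_sign:
  assumes lin: "clinear L"
  shows "conv (on_fst (\<lambda>e c. alt_sign c *c L e c)) (\<lambda>q. alt_sign (fst q) *c X q) (a, b) = alt_sign
      a *c conv (on_fst L) X (a, b)"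
proof -
  have "on_fst (\<lambda>e c. alt_sign c *c L e c) (alt_sign (fst q) *c X q) ((a, b) - q) = alt_sign a *c
      on_fst L (X q) ((a, b) - q)" for q
  proof (cases q)
    case (Pair c d)
    have "on_fst (\<lambda>e c. alt_sign c *c L e c) (alt_sign c *c X q) (a - c, b - d) =
        (if b - d = 0 then (alt_sign (a - c) * alt_sign c) *c L (X q) (a - c) else 0)"
      by (simp add: on_fst_def clinear_scale[OF lin] cscale_fun_apply cscale_cscale)
    then show ?thesis using Pair by (simp add: alt_sign_diff_mult on_fst_def cvs.scale_zero_right)
  qed
  then show ?thesis unfolding conv_def by (simp add: supp_sum_cscale)
qed

lemma conv_on_snd_alt_sign:
  assumes lin: "clinear L"
  shows "conv (on_snd L) (\<lambda>q. alt_sign (fst q) *c X q) (a, b) = alt_sign a *c conv (on_snd L) X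
      (a, b)"
proof -
  have "on_snd L (alt_sign (fst q) *c X q) ((a, b) - q) = alt_sign a *c on_snd L (X q)
      ((a, b) - q)" for q
    by (cases q) (simp add: on_snd_def clinear_scale[OF lin] cscale_fun_apply cvs.scale_zero_right)
  then show ?thesis unfolding conv_def by (simp add: supp_sum_cscale)
qed

lemma conv_expand_kernel_alt_sign:
  assumes lin: "clinear L"
  shows "conv (expand_kernel \<sigma> (\<lambda>e n. alt_sign n *c L e n)) (\<lambda>q. alt_sign (fst q) *c X q) (a, b) =
      alt_sign a *c conv (expand_kernel (- \<sigma>) L) X (a, b)"
proof -
  have "expand_kernel \<sigma> (\<lambda>e n. alt_sign n *c L e n) (alt_sign (fst q) *c X q) ((a, b) - q) =
      alt_sign a *c expand_kernel (- \<sigma>) L (X q) ((a, b) - q)" for q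
  proof (cases q)
    case (Pair c d)
    have e1: "(\<lambda>n. alt_sign n *c L (alt_sign c *c X q) n) =
        (\<lambda>n. alt_sign n *c (alt_sign c *c L (X q) n))"
      by (simp add: clinear_scale[OF lin] cscale_fun_apply)
    have "expand_kernel \<sigma> (\<lambda>e n. alt_sign n *c L e n) (alt_sign c *c X q) (a - c, b - d) = expand
        \<sigma> (\<lambda>n. alt_sign n *c (alt_sign c *c L (X q) n)) (a - c) (b - d)"
      unfolding expand_kernel_def e1 by simp
    also have "\<dots> = alt_sign (a - c) *c expand (- \<sigma>) (\<lambda>n. alt_sign c *c L (X q) n) (a - c) (b - d)"
      by (rule expand_alt_sign)
    also have "\<dots> = (alt_sign (a - c) * alt_sign c) *c expand (- \<sigma>) (L (X q)) (a - c) (b - d)"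
      by (simp add: expand_cscale cscale_cscale)
    finally show ?thesis using Pair by (simp add: alt_sign_diff_mult expand_kernel_def)
  qed
  then show ?thesis unfolding conv_def by (simp add: supp_sum_cscale)
qed

lemma negx_negx: "negx (negx F) = (F :: int \<Rightarrow> 'a::cvs)"
  by (rule ext) (simp add: negx_eq_alt_sign cscale_cscale alt_sign_square cscale_one)

lemma admissible_negx:
  assumes F: "uni.admissible F"
  shows "uni.admissible (negx F)"
proof -
  obtain N SS where N: "uni.supp_in F N" and S: "finite SS" "\<And>q. F q \<in> cvs.span SS"
      using uni.admissibleE[OF F] by blast
  have "uni.supp_in (negx F) N" using N by (auto simp: uni.supp_in_def negx_eq_alt_sign)
  moreover have "range (negx F) \<subseteq> cvs.span SS" using S
      by (auto simp: negx_eq_alt_sign intro!: cvs.span_scale)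
  ultimately show ?thesis using S(1) unfolding uni.admissible_def uni.cone_supp_def
      uni.fin_span_def by (intro conjI exI)
qed

lemma negx_delta: "negx (delta x) = delta (x :: 'a::cvs)"
  by (rule ext) (simp add: negx_eq_alt_sign delta_def alt_sign_def cscale_one cvs.scale_zero_right)

lemma conv_negx:
  assumes lin: "clinear T"
  shows "conv (\<lambda>s. negx (T s)) F = negx (conv T (negx F))"
proof
  fix m
  have "negx (conv T (negx F)) m = alt_sign m *c supp_sum (\<lambda>n. T (alt_sign n *c F n) (m - n))"
    by (simp add: negx_eq_alt_sign conv_def)
  also have "\<dots> = supp_sum (\<lambda>n. alt_sign m *c T (alt_sign n *c F n) (m - n))"
    by (rule supp_sum_cscale[symmetric]) simp
  also have "\<dots> = supp_sum (\<lambda>n. negx (T (F n)) (m - n))"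
  proof (rule supp_sum_cong)
    fix n
    have "alt_sign m * alt_sign n = alt_sign (m - n)" by (simp add: alt_sign_diff)
    then show "alt_sign m *c T (alt_sign n *c F n) (m - n) = negx (T (F n)) (m - n)"
      by (simp add: negx_eq_alt_sign clinear_scale[OF lin] cscale_fun_apply cscale_cscale)
  qed
  finally show "conv (\<lambda>s. negx (T s)) F m = negx (conv T (negx F)) m" by (simp add: conv_def)
qed

lemma clinear_negx: "clinear T \<Longrightarrow> clinear (\<lambda>s. negx (T s))"
  by (rule clinear_funI)
    (simp add: negx_eq_alt_sign clinear_comp[OF clinear_cscale clinear_fun_app])

section \<open>The inverse of an invertible kernel\<close>

locale invertible_kernel =
  fixes R :: "'a::cvs \<Rightarrow> int \<Rightarrow> 'b::cvs"
  assumes clinear_kernel: "clinear R"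
    and fser_kernel: "\<And>t. fser (R t)"
    and invertible: "tw_invertible R"
begin

lemma admissible_kernel: "uni.admissible_kernel R"
  using clinear_kernel fser_kernel
  by (simp add: uni.admissible_kernel_def uni.cone_kernel_def fser_iff_admissible
      uni.admissible_def)

lemma cone_kernel: "uni.cone_kernel R"
  by (rule uni.admissible_kernel_cone_kernel[OF admissible_kernel])

lemma bij_betw_conv: "bij_betw (conv R) {F. uni.admissible F} {G. uni.admissible G}"
  using invertible by (simp add: tw_invertible_def ext_eq_conv fser_iff_admissible)

lemma tw_inverse_eq: "tw_inverse R e = inv_into {F. uni.admissible F} (conv R) (delta e)"
  by (simp add: tw_inverse_def fser_iff_admissible ext_eq_conv delta0_eq_delta)

lemma admissible_inverse: "uni.admissible (tw_inverse R e)"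
  unfolding tw_inverse_eq
  by (rule inv_into_into[of _ _ "{F. uni.admissible F}", simplified])
    (use bij_betw_imp_surj_on[OF bij_betw_conv] uni.admissible_delta in blast)

lemma conv_inverse: "conv R (tw_inverse R e) = delta e"
  unfolding tw_inverse_eq by (rule bij_betw_inv_into_right[OF bij_betw_conv])
      (simp add: uni.admissible_delta)

lemma conv_inj: "uni.admissible F \<Longrightarrow> uni.admissible G \<Longrightarrow> conv R F = conv R G \<Longrightarrow> F = G"
  using bij_betw_imp_inj_on[OF bij_betw_conv] by (auto simp: inj_on_def)

lemma inverse_unique: "uni.admissible F \<Longrightarrow> conv R F = delta e \<Longrightarrow> tw_inverse R e = F"
  using conv_inj[OF admissible_inverse] conv_inverse by simp

lemma clinear_inverse: "clinear (tw_inverse R)"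
proof (rule clinearI)
  fix x y
  have "tw_inverse R (x + y) = (\<lambda>p. tw_inverse R x p + tw_inverse R y p)"
    by (rule inverse_unique)
      (simp_all add: uni.admissible_add admissible_inverse delta_def fun_eq_iff conv_inverse
        uni.conv_add[OF cone_kernel admissible_inverse admissible_inverse])
  then show "tw_inverse R (x + y) = tw_inverse R x + tw_inverse R y" by (simp add: plus_fun_def)
next
  fix c x
  have "tw_inverse R (c *c x) = (\<lambda>p. c *c tw_inverse R x p)"
    by (rule inverse_unique)
      (simp_all add: uni.admissible_cscale admissible_inverse delta_def fun_eq_iff conv_inverse
        uni.conv_cscale[OF cone_kernel admissible_inverse] cvs.scale_zero_right)
  then show "tw_inverse R (c *c x) = c *c tw_inverse R x" by (simp add: cscale_fun_def)
qed

lemma admissible_kernel_inverse: "uni.admissible_kernel (tw_inverse R)"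
  using clinear_inverse admissible_inverse
  by (simp add: uni.admissible_kernel_def uni.cone_kernel_def uni.admissible_def)

lemma conv_conv_inverse: "uni.admissible G \<Longrightarrow> conv R (conv (tw_inverse R) G) = G"
  using uni.conv_assoc[OF cone_kernel admissible_kernel_inverse] uni.conv_delta_kernel[of "\<lambda>x. x"]
  by (simp add: conv_inverse)

lemma conv_inverse_conv: "uni.admissible F \<Longrightarrow> conv (tw_inverse R) (conv R F) = F"
  by (rule conv_inj)
    (simp_all add: uni.admissible_conv admissible_kernel_inverse admissible_kernel
        conv_conv_inverse)

lemma conv_one_tensor_inverse: "conv (one_tensor R) (one_tensor (tw_inverse R) z) = delta z"
  by (simp add: conv_one_tensor[OF cone_kernel admissible_kernel_inverse] conv_inverse
      one_tensor_delta)

lemma conv_tensor_one_inverse: "conv (tensor_one R) (tensor_one (tw_inverse R) z) = delta z"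
  by (simp add: conv_tensor_one[OF cone_kernel admissible_kernel_inverse] conv_inverse
      tensor_one_delta)

lemma inverse_eq_slice:
  assumes K: "uni.cone_kernel K" and G: "bi.admissible G"
    and eq: "conv (on_fst R) (conv (on_snd K) G) = on_snd L e"
  shows "tw_inverse R (L e b) = (\<lambda>a. conv (on_snd K) G (a, b))"
proof (rule inverse_unique)
  show "uni.admissible (\<lambda>a. conv (on_snd K) G (a, b))" by (rule admissible_slice[OF K G])
  show "conv R (\<lambda>a. conv (on_snd K) G (a, b)) = delta (L e b)"
    by (rule ext) (simp add: conv_slice_fst eq on_snd_def delta_def)
qed

lemma tw_inverse_eq_delta: "R x = delta y \<Longrightarrow> tw_inverse R y = delta x"
  by (rule inverse_unique) (simp_all add: uni.admissible_delta uni.conv_delta[OF clinear_kernel])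

lemma fser_negx_inverse: "fser (negx (tw_inverse R e))"
  by (simp add: fser_iff_admissible admissible_negx admissible_inverse)

text \<open>The extension of R^-1(-x) over scalar series is that of R^-1 conjugated by F \<mapsto> F(-x);
  conjugating the extension of R likewise inverts it.\<close>
lemma tw_invertible_negx_inverse: "tw_invertible (\<lambda>s. negx (tw_inverse R s))"
proof -
  have e: "ext (\<lambda>s. negx (tw_inverse R s)) F = negx (conv (tw_inverse R) (negx F))" for F
    unfolding ext_eq_conv by (rule conv_negx[OF clinear_inverse])
  show ?thesis unfolding tw_invertible_def fser_iff_admissible
  proof (rule bij_betw_byWitness[where f'="\<lambda>G. negx (conv R (negx G))"])
    show "\<forall>F\<in>{F. uni.admissible F}. negx (conv R (negx (ext (\<lambda>s. negx (tw_inverse R s)) F))) = F"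
      by (simp add: e negx_negx conv_conv_inverse admissible_negx)
    show "\<forall>G\<in>{F. uni.admissible F}. ext (\<lambda>s. negx (tw_inverse R s)) (negx (conv R (negx G))) = G"
      by (simp add: e negx_negx conv_inverse_conv admissible_negx)
    show "ext (\<lambda>s. negx (tw_inverse R s)) ` {F. uni.admissible F} \<subseteq> {F. uni.admissible F}"
      by (auto simp: e intro!: admissible_negx uni.admissible_conv[OF admissible_kernel_inverse])
    show "(\<lambda>G. negx (conv R (negx G))) ` {F. uni.admissible F} \<subseteq> {F. uni.admissible F}"
      by (auto intro!: admissible_negx uni.admissible_conv[OF admissible_kernel])
  qed
qed

end

lemma cbilinear_vertex_op: "nonlocal_va Y one \<Longrightarrow> cbilinear Y"
  by (simp add: nonlocal_va_def cbilinear_def clinear_fun_app)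

lemma cone_kernel_vertex_op:
  assumes Y: "nonlocal_va Y one"
  shows "uni.cone_kernel (tlift Y)"
proof -
  have Y2: "cbilinear Y" by (rule cbilinear_vertex_op[OF Y])
  have lin: "clinear (tlift Y)" by (rule clinear_tlift[OF Y2])
  have "uni.cone_supp (tlift Y w)" for w
  proof (induct w rule: tensor_induct)
    case zero show ?case by (rule uni.cone_supp_clinear_zero[OF lin])
  next
    case (tprod a b)
    have "lbounded (Y a b)" using Y by (simp add: nonlocal_va_def)
    then show ?case by (simp add: tlift_tprod[OF Y2] lbounded_iff_cone_supp)
  next
    case (add x y) then show ?case by (rule uni.cone_supp_clinear_add[OF lin])
  qed
  then show ?thesis by (simp add: uni.cone_kernel_def lin)
qed

definition at12 :: "(('a::cvs, 'b::cvs) tensor \<Rightarrow> int \<Rightarrow> 'd::cvs)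
    \<Rightarrow> ('a, ('b, 'c::cvs) tensor) tensor \<Rightarrow> int \<Rightarrow> ('d, 'c) tensor" where
  "at12 L e = tensor_one L (tassoc' e)"

definition at23 :: "(('b::cvs, 'c::cvs) tensor \<Rightarrow> int \<Rightarrow> 'd::cvs)
    \<Rightarrow> (('a::cvs, 'b) tensor, 'c) tensor \<Rightarrow> int \<Rightarrow> ('a, 'd) tensor" where
  "at23 L e = one_tensor L (tassoc e)"

lemma clinear_at12: "clinear L \<Longrightarrow> clinear (at12 L)"
  unfolding at12_def[abs_def] by (rule clinear_comp[OF clinear_tensor_one clinear_tassoc'])

lemma clinear_at23: "clinear L \<Longrightarrow> clinear (at23 L)"
  unfolding at23_def[abs_def] by (rule clinear_comp[OF clinear_one_tensor clinear_tassoc])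

lemma cone_kernel_at12: "uni.cone_kernel L \<Longrightarrow> uni.cone_kernel (at12 L)"
  unfolding at12_def[abs_def]
      by (rule uni.cone_kernel_comp[OF cone_kernel_tensor_one clinear_tassoc'])

lemma cone_kernel_at23: "uni.cone_kernel L \<Longrightarrow> uni.cone_kernel (at23 L)"
  unfolding at23_def[abs_def]
      by (rule uni.cone_kernel_comp[OF cone_kernel_one_tensor clinear_tassoc])

lemma admissible_kernel_at12: "uni.admissible_kernel L \<Longrightarrow> uni.admissible_kernel (at12 L)"
  unfolding at12_def[abs_def]
      by (rule uni.admissible_kernel_comp[OF admissible_kernel_tensor_one clinear_tassoc'])

lemma admissible_kernel_at23: "uni.admissible_kernel L \<Longrightarrow> uni.admissible_kernel (at23 L)"
  unfolding at23_def[abs_def]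
      by (rule uni.admissible_kernel_comp[OF admissible_kernel_one_tensor clinear_tassoc])

lemma one_tensor_negx: "clinear S \<Longrightarrow> one_tensor (\<lambda>s. negx (S s)) z n = alt_sign n *c one_tensor S z
    n"
  by (simp add: one_tensor_def negx_eq_alt_sign tmap_cscale_right clinear_fun_app clinear_id)

lemma tensor_one_negx: "clinear S \<Longrightarrow> tensor_one (\<lambda>s. negx (S s)) z n = alt_sign n *c tensor_one S z
    n"
  by (simp add: tensor_one_def negx_eq_alt_sign tmap_cscale_left clinear_fun_app clinear_id)

text \<open>(Y(x2) \<otimes> 1) R^23(x1) R^12(x1 + \<sigma> x2) and (1 \<otimes> Y(x2)) R^12(x1 + \<sigma> x2) R^23(x1).\<close>
definition hexagon1 ::
  "complex \<Rightarrow> ('u::cvs \<Rightarrow> 'u \<Rightarrow> int \<Rightarrow> 'u) \<Rightarrow> (('v::cvs, 'u) tensor \<Rightarrow> int \<Rightarrow> ('u, 'v) tensor)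
     \<Rightarrow> (('v, 'u) tensor, 'u) tensor \<Rightarrow> int \<times> int \<Rightarrow> ('u, 'v) tensor" where
  "hexagon1 \<sigma> Y R t =
     conv (on_snd (at12 (tlift Y))) (conv (on_fst (at23 R)) (expand_kernel \<sigma> (tensor_one R) t))"

definition hexagon2 ::
  "complex \<Rightarrow> ('v::cvs \<Rightarrow> 'v \<Rightarrow> int \<Rightarrow> 'v) \<Rightarrow> (('v, 'u::cvs) tensor \<Rightarrow> int \<Rightarrow> ('u, 'v) tensor)
     \<Rightarrow> (('v, 'v) tensor, 'u) tensor \<Rightarrow> int \<times> int \<Rightarrow> ('u, 'v) tensor" where
  "hexagon2 \<sigma> Y R t =
     conv (on_snd (at23 (tlift Y))) (conv (expand_kernel \<sigma> (at12 R)) (on_fst (at23 R) t))"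

lemma hexL1_eq_conv:
  "clinear R \<Longrightarrow> hexL1 Y R t a b = conv (on_fst R) (on_snd (at23 (tlift Y)) t) (a, b)"
  by (simp add: conv_on_fst_on_snd hexL1_def at23_def one_tensor_def)

lemma hexL2_eq_conv:
  "clinear R \<Longrightarrow> hexL2 Y R t a b = conv (on_fst R) (on_snd (tensor_one (tlift Y)) t) (a, b)"
  by (simp add: conv_on_fst_on_snd hexL2_def tensor_one_def)

lemma hexR1_eq_hexagon1: "hexR1 Y R t a b = hexagon1 1 Y R t (a, b)"
proof -
  have "case_prod (sub2 (\<lambda>n. tmap (\<lambda>s. R s n) id t)) = expand_kernel 1 (tensor_one R) t"
    by (auto simp: sub2_eq_expand expand_kernel_def tensor_one_def[abs_def])
  then show ?thesis
    by (simp add: hexR1_def hexagon1_def ext2_eq_conv ext1_eq_conv[abs_def] split_def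
        at12_def[abs_def] at23_def[abs_def] tensor_one_def[abs_def] one_tensor_def[abs_def])
qed

lemma hexR2_eq_hexagon2:
  assumes "clinear R"
  shows "hexR2 Y R t a b = hexagon2 (-1) Y R t (a, b)"
proof -
  from ext12_eq_conv[OF clinear_at12[OF assms], of "-1" "at23 R" t] show ?thesis
    by (simp add: hexR2_def hexagon2_def ext2_eq_conv subm2_eq_expand split_def
        at12_def[abs_def] at23_def[abs_def] tensor_one_def[abs_def] one_tensor_def[abs_def])
qed

lemma hexagon1_negx:
  assumes S: "clinear S" and Y: "cbilinear Y"
  shows "hexagon1 \<sigma> Y (\<lambda>s. negx (S s)) t (a, b) = alt_sign a *c hexagon1 (- \<sigma>) Y S t (a, b)"
proof -
  let ?X = "expand_kernel (- \<sigma>) (tensor_one S) t"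
  have "tensor_one (\<lambda>s. negx (S s)) t = (\<lambda>n. alt_sign n *c tensor_one S t n)"
    by (rule ext) (rule tensor_one_negx[OF S])
  then have X: "expand_kernel \<sigma> (tensor_one (\<lambda>s. negx (S s))) t = (\<lambda>q. alt_sign (fst q) *c ?X q)"
    by (auto simp: expand_kernel_def expand_alt_sign)
  have K: "at23 (\<lambda>s. negx (S s)) = (\<lambda>e c. alt_sign c *c at23 S e c)"
    by (intro ext) (simp add: at23_def one_tensor_negx[OF S])
  have "conv (on_fst (at23 (\<lambda>s. negx (S s)))) (expand_kernel \<sigma> (tensor_one (\<lambda>s. negx (S s))) t)
      = (\<lambda>q. alt_sign (fst q) *c conv (on_fst (at23 S)) ?X q)"
    by (auto simp: K X conv_on_fst_alt_sign[OF clinear_at23[OF S]])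
  then show ?thesis
    by (simp add: hexagon1_def conv_on_snd_alt_sign[OF clinear_at12[OF clinear_tlift[OF Y]]])
qed

lemma hexagon2_negx:
  assumes S: "clinear S" and Y: "cbilinear Y"
  shows "hexagon2 \<sigma> Y (\<lambda>s. negx (S s)) t (a, b) = alt_sign a *c hexagon2 (- \<sigma>) Y S t (a, b)"
proof -
  have X: "on_fst (at23 (\<lambda>s. negx (S s))) t = (\<lambda>q. alt_sign (fst q) *c on_fst (at23 S) t q)"
    by (auto simp: on_fst_def at23_def one_tensor_negx[OF S])
  have K: "at12 (\<lambda>s. negx (S s)) = (\<lambda>e n. alt_sign n *c at12 S e n)"
    by (intro ext) (simp add: at12_def tensor_one_negx[OF S])
  have "conv (expand_kernel \<sigma> (at12 (\<lambda>s. negx (S s)))) (on_fst (at23 (\<lambda>s. negx (S s))) t)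
      = (\<lambda>q. alt_sign (fst q) *c conv (expand_kernel (- \<sigma>) (at12 S)) (on_fst (at23 S) t) q)"
    by (auto simp: K X conv_expand_kernel_alt_sign[OF clinear_at12[OF S]])
  then show ?thesis
    by (simp add: hexagon2_def conv_on_snd_alt_sign[OF clinear_at23[OF clinear_tlift[OF Y]]])
qed

lemma hexL1_negx:
  "clinear S \<Longrightarrow> hexL1 Y (\<lambda>s. negx (S s)) t a b = alt_sign a *c S (at23 (tlift Y) t b) a"
  by (simp add: hexL1_def negx_eq_alt_sign at23_def one_tensor_def)

lemma hexL2_negx:
  "clinear S \<Longrightarrow> hexL2 Y (\<lambda>s. negx (S s)) t a b = alt_sign a *c S (tensor_one (tlift Y) t b) a"
  by (simp add: hexL2_def negx_eq_alt_sign tensor_one_def)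

lemma hexagon2_conv_at12:
  assumes R: "clinear R" and hex2: "\<And>t. hexL2 Y R t = hexR2 Y R t"
  shows "conv (on_fst R) (on_snd (at12 (tlift Y)) e)
    = conv (on_snd (at23 (tlift Y))) (conv (expand_kernel (-1) (at12 R)) (on_fst (one_tensor R) e))"
proof
  fix p :: "int \<times> int"
  have Y12: "on_snd (at12 (tlift Y)) e = on_snd (tensor_one (tlift Y)) (tassoc' e)"
    by (rule ext) (simp add: on_snd_def at12_def)
  have R23: "on_fst (at23 R) (tassoc' e) = on_fst (one_tensor R) e"
    by (rule ext) (simp add: on_fst_def at23_def)
  have "conv (on_fst R) (on_snd (at12 (tlift Y)) e) p = hexL2 Y R (tassoc' e) (fst p) (snd p)"
    by (simp add: Y12 hexL2_eq_conv[OF R])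
  also have "\<dots> = hexagon2 (-1) Y R (tassoc' e) p"
    by (simp add: hex2 hexR2_eq_hexagon2[OF R])
  finally show "conv (on_fst R) (on_snd (at12 (tlift Y)) e) p
    = conv (on_snd (at23 (tlift Y)))
        (conv (expand_kernel (-1) (at12 R)) (on_fst (one_tensor R) e)) p"
    by (simp add: hexagon2_def R23)
qed

lemma hexagon1_conv_at23:
  assumes R: "clinear R" and hex1: "\<And>t. hexL1 Y R t = hexR1 Y R t"
  shows "conv (on_fst R) (on_snd (at23 (tlift Y)) e) = hexagon1 1 Y R e"
proof
  fix p :: "int \<times> int"
  have "conv (on_fst R) (on_snd (at23 (tlift Y)) e) p = hexL1 Y R e (fst p) (snd p)"
    by (simp add: hexL1_eq_conv[OF R])
  then show "conv (on_fst R) (on_snd (at23 (tlift Y)) e) p = hexagon1 1 Y R e p"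
    by (simp add: hex1 hexR1_eq_hexagon1)
qed

section \<open>The hexagon identities for the inverse\<close>

lemma conv_one_tensor_at23_inverse:
  assumes R: "invertible_kernel R" and X: "bi.admissible X"
  shows "conv (on_fst (one_tensor R)) (conv (on_fst (at23 (tw_inverse R))) X) = (\<lambda>p. tassoc (X p))"
proof -
  interpret invertible_kernel R by (rule R)
  have kernel: "(\<lambda>e. conv (on_fst (one_tensor R)) (on_fst (at23 (tw_inverse R)) e)) =
      (\<lambda>e. delta (tassoc e))"
    by (rule ext) (simp add: conv_on_fst_on_fst clinear_one_tensor clinear_kernel at23_def
        conv_one_tensor_inverse on_fst_delta[of tassoc])
  have "conv (on_fst (one_tensor R)) (conv (on_fst (at23 (tw_inverse R))) X)
      = conv (\<lambda>e. conv (on_fst (one_tensor R)) (on_fst (at23 (tw_inverse R)) e)) X"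
    by (intro bi.conv_assoc X cone_kernel_on_fst cone_kernel_one_tensor cone_kernel
        admissible_kernel_on_fst admissible_kernel_at23 admissible_kernel_inverse)
  also have "\<dots> = (\<lambda>p. tassoc (X p))"
    unfolding kernel by (rule bi.conv_delta_kernel) (simp add: clinear_zero[OF clinear_tassoc])
  finally show ?thesis .
qed

lemma conv_at12_expand_inverse:
  assumes R: "invertible_kernel R"
  shows "conv (expand_kernel \<sigma> (at12 R))
      (\<lambda>p. tassoc (expand_kernel \<sigma> (tensor_one (tw_inverse R)) s p))
    = delta s"
proof
  interpret invertible_kernel R by (rule R)
  fix p :: "int \<times> int"
  define F where "F n = tassoc (tensor_one (tw_inverse R) s n)" for n
  have F_adm: "uni.admissible F" unfolding F_def
    by (intro uni.admissible_image[OF clinear_tassoc] uni.admissible_kernel_admissible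
        admissible_kernel_tensor_one admissible_kernel_inverse)
  have "conv (at12 R) F = conv (tensor_one R) (tensor_one (tw_inverse R) s)"
    by (rule ext) (simp add: F_def at12_def conv_def)
  then have "conv (at12 R) F = delta s" by (simp add: conv_tensor_one_inverse)
  moreover have "(\<lambda>p. tassoc (expand_kernel \<sigma> (tensor_one (tw_inverse R)) s p))
      = (\<lambda>p. expand \<sigma> F (fst p) (snd p))"
    by (simp add: expand_kernel_def F_def[abs_def] clinear_expand[OF clinear_tassoc])
  ultimately show "conv (expand_kernel \<sigma> (at12 R))
      (\<lambda>p. tassoc (expand_kernel \<sigma> (tensor_one (tw_inverse R)) s p)) p = delta s p"
    using conv_expand_kernel_expand[OF clinear_at12[OF clinear_kernel]
        uni.finite_conv_terms[OF cone_kernel_at12[OF cone_kernel] F_adm]]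
    by (cases p) (simp add: expand_delta)
qed

lemma conv_expand_tensor_one_inverse:
  assumes R: "invertible_kernel R" and X: "bi.admissible X"
  shows "conv (expand_kernel \<sigma> (tensor_one R)) (conv (expand_kernel \<sigma> (at12 (tw_inverse R))) X)
    = (\<lambda>p. tassoc' (X p))"
proof -
  interpret invertible_kernel R by (rule R)
  let ?S12 = "expand_kernel \<sigma> (at12 (tw_inverse R))"
  have kernel: "(\<lambda>e. conv (expand_kernel \<sigma> (tensor_one R)) (?S12 e)) = (\<lambda>e. delta (tassoc' e))"
  proof (intro ext)
    fix e and p :: "int \<times> int"
    have S12e: "?S12 e = (\<lambda>p. expand \<sigma> (at12 (tw_inverse R) e) (fst p) (snd p))"
      by (rule ext) (simp add: expand_kernel_def)
    have "conv (tensor_one R) (at12 (tw_inverse R) e) = delta (tassoc' e)"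
      by (simp add: at12_def conv_tensor_one_inverse)
    moreover have "conv (expand_kernel \<sigma> (tensor_one R)) (?S12 e) (a, b)
        = expand \<sigma> (conv (tensor_one R) (at12 (tw_inverse R) e)) a b" for a b
      unfolding S12e
      by (rule conv_expand_kernel_expand[OF clinear_tensor_one[OF clinear_kernel]
            uni.finite_conv_terms[OF cone_kernel_tensor_one[OF cone_kernel]
              uni.admissible_kernel_admissible[OF
                  admissible_kernel_at12[OF admissible_kernel_inverse]]]])
    ultimately show "conv (expand_kernel \<sigma> (tensor_one R)) (?S12 e) p = delta (tassoc' e) p"
      by (cases p) (simp add: expand_delta)
  qed
  have "conv (expand_kernel \<sigma> (tensor_one R)) (conv ?S12 X)
      = conv (\<lambda>e. conv (expand_kernel \<sigma> (tensor_one R)) (?S12 e)) X"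
    by (intro bi.conv_assoc X bi.admissible_kernel_cone_kernel admissible_kernel_expand_kernel
        admissible_kernel_tensor_one admissible_kernel admissible_kernel_at12
            admissible_kernel_inverse)
  also have "\<dots> = (\<lambda>p. tassoc' (X p))"
    unfolding kernel by (rule bi.conv_delta_kernel) (simp add: clinear_zero[OF clinear_tassoc'])
  finally show ?thesis .
qed

lemma conv_at23_on_fst_inverse:
  assumes R: "invertible_kernel R"
  shows "conv (on_fst (at23 R)) (\<lambda>p. tassoc' (on_fst (at23 (tw_inverse R)) t p)) = delta (tassoc t)"
proof -
  interpret invertible_kernel R by (rule R)
  have X: "(\<lambda>p. tassoc' (on_fst (at23 (tw_inverse R)) t p)) = on_fst
      (\<lambda>t c. tassoc' (at23 (tw_inverse R) t c)) t"
    by (rule ext) (simp add: on_fst_def clinear_zero[OF clinear_tassoc'])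
  have kernel: "(\<lambda>u. conv (at23 R) (\<lambda>c. tassoc' (at23 (tw_inverse R) u c))) =
      (\<lambda>u. delta (tassoc u))"
  proof
    fix u
    have "conv (at23 R) (\<lambda>c. tassoc' (at23 (tw_inverse R) u c))
        = conv (one_tensor R) (one_tensor (tw_inverse R) (tassoc u))"
      by (rule ext) (simp add: conv_def at23_def)
    then show "conv (at23 R) (\<lambda>c. tassoc' (at23 (tw_inverse R) u c)) = delta (tassoc u)"
      by (simp add: conv_one_tensor_inverse)
  qed
  show ?thesis
    unfolding X conv_on_fst_on_fst[OF clinear_at23[OF clinear_kernel]] kernel by (rule on_fst_delta)
qed

text \<open>Composing the second hexagon identity of R with S^23(x1) S^12(x1 - x2), S = R^-1.\<close>
lemma tw_inverse_hexagon1: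
  assumes R: "invertible_kernel R" and Y: "nonlocal_va Y one"
    and hex2: "\<And>t. hexL2 Y R t = hexR2 Y R t"
  shows "tw_inverse R (at23 (tlift Y) s b) = (\<lambda>a. hexagon1 (-1) Y (tw_inverse R) s (a, b))"
proof -
  interpret invertible_kernel R by (rule R)
  let ?Y = "tlift Y"
  define X where "X = expand_kernel (-1) (tensor_one (tw_inverse R)) s"
  define G where "G = conv (on_fst (at23 (tw_inverse R))) X"
  have Yc: "uni.cone_kernel ?Y" by (rule cone_kernel_vertex_op[OF Y])
  have X_adm: "bi.admissible X" unfolding X_def
    by (intro bi.admissible_kernel_admissible admissible_kernel_expand_kernel
        admissible_kernel_tensor_one admissible_kernel_inverse)
  have G_adm: "bi.admissible G" unfolding G_def
    by (intro bi.admissible_conv X_adm admissible_kernel_on_fst admissible_kernel_at23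
        admissible_kernel_inverse)
  have R23: "bi.admissible_kernel (on_fst (one_tensor R))"
    by (intro admissible_kernel_on_fst admissible_kernel_one_tensor admissible_kernel)
  have R12: "bi.admissible_kernel (expand_kernel (-1) (at12 R))"
    by (intro admissible_kernel_expand_kernel admissible_kernel_at12 admissible_kernel)
  have "conv (on_fst R) (conv (on_snd (at12 ?Y)) G) = conv
      (\<lambda>e. conv (on_fst R) (on_snd (at12 ?Y) e)) G"
    by (rule conv_on_fst_conv_on_snd[OF cone_kernel cone_kernel_at12[OF Yc] G_adm])
  also have "\<dots> = conv (on_snd (at23 ?Y))
      (conv (expand_kernel (-1) (at12 R)) (conv (on_fst (one_tensor R)) G))"
    unfolding hexagon2_conv_at12[OF clinear_kernel hex2]
    by (simp add: bi.conv_assoc[OF bi.admissible_kernel_cone_kernel[OF R12] R23 G_adm]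
        bi.conv_assoc[OF cone_kernel_on_snd[OF cone_kernel_at23[OF Yc]]
            bi.admissible_kernel_conv[OF R12 R23] G_adm])
  also have "\<dots> = on_snd (at23 ?Y) s"
    by (simp add: G_def X_def conv_one_tensor_at23_inverse[OF R X_adm[unfolded X_def]]
        conv_at12_expand_inverse[OF R] bi.conv_delta bi.cone_kernel_clinear cone_kernel_on_snd
        cone_kernel_at23 Yc)
  finally have "conv (on_fst R) (conv (on_snd (at12 ?Y)) G) = on_snd (at23 ?Y) s" .
  from inverse_eq_slice[OF cone_kernel_at12[OF Yc] G_adm this] show ?thesis
    by (simp add: hexagon1_def X_def G_def)
qed

text \<open>Composing the first hexagon identity of R with S^12(x1 + x2) S^23(x1), S = R^-1.\<close>
lemma tw_inverse_hexagon2: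
  assumes R: "invertible_kernel R" and Y: "nonlocal_va Y one"
    and hex1: "\<And>t. hexL1 Y R t = hexR1 Y R t"
  shows "tw_inverse R (tensor_one (tlift Y) t b) = (\<lambda>a. hexagon2 1 Y (tw_inverse R) t (a, b))"
proof -
  interpret invertible_kernel R by (rule R)
  let ?Y = "tlift Y"
  define X where "X = on_fst (at23 (tw_inverse R)) t"
  define G where "G = conv (expand_kernel 1 (at12 (tw_inverse R))) X"
  have Yc: "uni.cone_kernel ?Y" by (rule cone_kernel_vertex_op[OF Y])
  have X_adm: "bi.admissible X" unfolding X_def
    by (intro bi.admissible_kernel_admissible admissible_kernel_on_fst admissible_kernel_at23
        admissible_kernel_inverse)
  have G_adm: "bi.admissible G" unfolding G_def
    by (intro bi.admissible_conv X_adm admissible_kernel_expand_kernel admissible_kernel_at12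
        admissible_kernel_inverse)
  have R12: "bi.admissible_kernel (expand_kernel 1 (tensor_one R))"
    by (intro admissible_kernel_expand_kernel admissible_kernel_tensor_one admissible_kernel)
  have R23: "bi.admissible_kernel (on_fst (at23 R))"
    by (intro admissible_kernel_on_fst admissible_kernel_at23 admissible_kernel)
  have "conv (on_fst R) (conv (on_snd (at23 ?Y)) G) = conv
      (\<lambda>e. conv (on_fst R) (on_snd (at23 ?Y) e)) G"
    by (rule conv_on_fst_conv_on_snd[OF cone_kernel cone_kernel_at23[OF Yc] G_adm])
  also have "\<dots> = conv (on_snd (at12 ?Y))
      (conv (on_fst (at23 R)) (conv (expand_kernel 1 (tensor_one R)) G))"
    unfolding hexagon1_conv_at23[OF clinear_kernel hex1] hexagon1_def
    by (simp add: bi.conv_assoc[OF bi.admissible_kernel_cone_kernel[OF R23] R12 G_adm]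
        bi.conv_assoc[OF cone_kernel_on_snd[OF cone_kernel_at12[OF Yc]]
            bi.admissible_kernel_conv[OF R23 R12] G_adm])
  also have "\<dots> = conv (on_snd (at12 ?Y)) (conv (on_fst (at23 R)) (\<lambda>p. tassoc' (X p)))"
    unfolding G_def conv_expand_tensor_one_inverse[OF R X_adm] ..
  also have "\<dots> = on_snd (at12 ?Y) (tassoc t)"
    by (simp add: X_def conv_at23_on_fst_inverse[OF R] bi.conv_delta bi.cone_kernel_clinear
        cone_kernel_on_snd cone_kernel_at12 Yc)
  also have "\<dots> = on_snd (tensor_one ?Y) t"
    by (rule ext) (simp add: on_snd_def at12_def)
  finally have "conv (on_fst R) (conv (on_snd (at23 ?Y)) G) = on_snd (tensor_one ?Y) t" .
  from inverse_eq_slice[OF cone_kernel_at23[OF Yc] G_adm this] show ?thesis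
    by (simp add: hexagon2_def X_def G_def)
qed

lemma hexagon1_negx_inverse:
  assumes R: "invertible_kernel R" and Y: "nonlocal_va Y one"
    and hex2: "\<And>t. hexL2 Y R t = hexR2 Y R t"
  shows "hexL1 Y (\<lambda>s. negx (tw_inverse R s)) s = hexR1 Y (\<lambda>s. negx (tw_inverse R s)) s"
proof (intro ext)
  fix a b
  have S: "clinear (tw_inverse R)" by (rule invertible_kernel.clinear_inverse[OF R])
  show "hexL1 Y (\<lambda>s. negx (tw_inverse R s)) s a b = hexR1 Y (\<lambda>s. negx (tw_inverse R s)) s a b"
    by (simp add: hexL1_negx[OF S] tw_inverse_hexagon1[OF R Y hex2] hexR1_eq_hexagon1
        hexagon1_negx[OF S cbilinear_vertex_op[OF Y]])
qed

lemma hexagon2_negx_inverse: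
  assumes R: "invertible_kernel R" and Y: "nonlocal_va Y one"
    and hex1: "\<And>t. hexL1 Y R t = hexR1 Y R t"
  shows "hexL2 Y (\<lambda>s. negx (tw_inverse R s)) t = hexR2 Y (\<lambda>s. negx (tw_inverse R s)) t"
proof (intro ext)
  fix a b
  have S: "clinear (tw_inverse R)" by (rule invertible_kernel.clinear_inverse[OF R])
  have "clinear (\<lambda>s. negx (tw_inverse R s))" by (rule clinear_negx[OF S])
  then show "hexL2 Y (\<lambda>s. negx (tw_inverse R s)) t a b = hexR2 Y (\<lambda>s. negx (tw_inverse R s)) t a b"
    by (simp add: hexL2_negx[OF S] tw_inverse_hexagon2[OF R Y hex1] hexR2_eq_hexagon2
        hexagon2_negx[OF S cbilinear_vertex_op[OF Y]])
qed

theorem lemma2p3: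
  fixes YU :: "'u::cvs \<Rightarrow> 'u \<Rightarrow> int \<Rightarrow> 'u" and oneU :: 'u
    and YV :: "'v::cvs \<Rightarrow> 'v \<Rightarrow> int \<Rightarrow> 'v" and oneV :: 'v
    and R :: "('v, 'u) tensor \<Rightarrow> int \<Rightarrow> ('u, 'v) tensor"
  assumes "nonlocal_va YU oneU"
    and "nonlocal_va YV oneV"
    and "twisting YU oneU YV oneV R"
    and "tw_invertible R"
  shows "twisting YV oneV YU oneU (\<lambda>s. negx (tw_inverse R s))
       \<and> tw_invertible (\<lambda>s. negx (tw_inverse R s))"
proof -
  have R: "invertible_kernel R"
    using assms(3,4) by (simp add: invertible_kernel_def twisting_def)
  interpret invertible_kernel R by (rule R)
  have "R (tprod v oneU) = delta (tprod oneU v)" "R (tprod oneV u) = delta (tprod u oneV)" for u v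
    using assms(3) by (simp_all add: twisting_def delta0_eq_delta)
  then have unit: "tw_inverse R (tprod oneU v) = delta (tprod v oneU)"
    "tw_inverse R (tprod u oneV) = delta (tprod oneV u)" for u v
    by (simp_all add: tw_inverse_eq_delta)
  have "twisting YV oneV YU oneU (\<lambda>s. negx (tw_inverse R s))"
    unfolding twisting_def
    using clinear_negx[OF clinear_inverse] fser_negx_inverse
      hexagon1_negx_inverse[OF R assms(2)] hexagon2_negx_inverse[OF R assms(1)] assms(3)
    by (simp add: unit negx_delta delta0_eq_delta twisting_def)
  then show ?thesis using tw_invertible_negx_inverse by simp
qed

end
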